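(* Let $b(t)$ be the Brownian motion on the spider graph $Sp_N$ ($N\ge2$) with Kirchhoff gluing at the origin, started at the origin. Let $L_1,\dots,L_N>0$ and let $\tau(L_1,\dots,L_N)$ be the first time $b$ hits one of the points $\{x_i=L_i\}$, $i=1,\dots,N$ (the point at distance $L_i$ from the origin on leg $l_i$). Then for every $\lambda>0$, $$E_0e^{-\lambda\tau(L_1,\dots,L_N)}=\frac{\sum_{i=1}^N\frac{\sqrt{2\lambda}}{\sinh\sqrt{2\lambda}L_i}}{\sum_{i=1}^N\sqrt{2\lambda}\,\frac{\cosh\sqrt{2\lambda}L_i}{\sinh\sqrt{2\lambda}L_i}}.$$
   Context: The spider graph $Sp_N$ consists of $N$ half-lines (legs) $l_1,\dots,l_N$, each a copy of $[0,\infty)$ with coordinate $x_i\ge0$, glued at their common endpoint $0$. The Brownian motion $b(t)$ on $Sp_N$ is the continuous strong Markov process with generator $\frac12\frac{d^2}{dx_i^2}$ on each leg, acting on functions continuous on $Sp_N$, twice differentiable on each leg, and satisfying Kirchhoff's condition $\sum_{i=1}^N f_i'(0)=0$ ($f_i'(0)$ the one-sided derivative at $0$ along leg $l_i$). Equivalently, away from $0$ it is a standard one-dimensional Brownian motion along the leg and from $0$ it enters each leg with equal probability $1/N$. $E_0$ denotes expectation for the process started at the origin. *)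

theory Defs
  imports "HOL-Probability.Probability"
begin

text \<open>Points of the spider graph Sp_N are represented as pairs (i, x) with
  leg index i < N (legs l_1..l_N are indexed 0..N-1) and coordinate x \<ge> 0;
  all pairs (i, 0) represent the common origin.\<close>

definition sp_point :: "nat \<Rightarrow> nat \<times> real \<Rightarrow> bool" where
  "sp_point N p \<longleftrightarrow> fst p < N \<and> snd p \<ge> 0"

definition sp_dist :: "nat \<times> real \<Rightarrow> nat \<times> real \<Rightarrow> real" where
  "sp_dist p q = (if fst p = fst q then \<bar>snd p - snd q\<bar> else snd p + snd q)"

definition sp_continuous_path :: "(real \<Rightarrow> nat \<times> real) \<Rightarrow> bool" where
  "sp_continuous_path w \<longleftrightarrow>
     (\<forall>t\<ge>0. \<forall>e>0. \<exists>d>0. \<forall>s\<ge>0. \<bar>s - t\<bar> < d \<longrightarrow> sp_dist (w s) (w t) < e)"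

text \<open>Domain of the generator: f is given legwise (f i = restriction to leg i),
  f1, f2 are its first and second (one-sided at 0) derivatives along each leg.
  f is continuous on Sp_N (equal values at the origin), twice differentiable
  on each leg, the generator (1/2) f'' is continuous on Sp_N (equal values of
  f'' at the origin), Kirchhoff's condition holds, and f, f', f'' are bounded.\<close>
definition sp_gen_domain ::
  "nat \<Rightarrow> (nat \<Rightarrow> real \<Rightarrow> real) \<Rightarrow> (nat \<Rightarrow> real \<Rightarrow> real) \<Rightarrow> (nat \<Rightarrow> real \<Rightarrow> real) \<Rightarrow> bool" where
  "sp_gen_domain N f f1 f2 \<longleftrightarrow>
     (\<forall>i<N. f i 0 = f 0 0) \<and>
     (\<forall>i<N. \<forall>x\<ge>0. (f i has_real_derivative f1 i x) (at x within {0..}) \<and>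
                   (f1 i has_real_derivative f2 i x) (at x within {0..})) \<and>
     (\<forall>i<N. continuous_on {0..} (f2 i)) \<and>
     (\<forall>i<N. f2 i 0 = f2 0 0) \<and>
     (\<Sum>i<N. f1 i 0) = 0 \<and>
     (\<exists>B. \<forall>i<N. \<forall>x\<ge>0. \<bar>f i x\<bar> \<le> B \<and> \<bar>f1 i x\<bar> \<le> B \<and> \<bar>f2 i x\<bar> \<le> B)"

text \<open>Martingale w.r.t. filtration F under M (continuous time, t \<ge> 0),
  written out via the defining property of conditional expectation.\<close>
definition is_martingale ::
  "'a measure \<Rightarrow> (real \<Rightarrow> 'a measure) \<Rightarrow> (real \<Rightarrow> 'a \<Rightarrow> real) \<Rightarrow> bool" where
  "is_martingale M F Y \<longleftrightarrow>
     (\<forall>t\<ge>0. Y t \<in> borel_measurable (F t) \<and> integrable M (Y t)) \<and>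
     (\<forall>s t A. 0 \<le> s \<longrightarrow> s \<le> t \<longrightarrow> A \<in> sets (F s) \<longrightarrow>
        (\<integral>\<omega>. indicator A \<omega> * Y t \<omega> \<partial>M) = (\<integral>\<omega>. indicator A \<omega> * Y s \<omega> \<partial>M))"

text \<open>Brownian motion on Sp_N started at the origin, as the continuous
  solution of the martingale problem for the generator (1/2) d^2/dx_i^2 with
  Kirchhoff gluing (Freidlin-Wentzell characterisation).\<close>
definition spider_BM ::
  "nat \<Rightarrow> 'a measure \<Rightarrow> (real \<Rightarrow> 'a measure) \<Rightarrow> (real \<Rightarrow> 'a \<Rightarrow> nat \<times> real) \<Rightarrow> bool" where
  "spider_BM N M F X \<longleftrightarrow>
     prob_space M \<and>
     filtration (space M) F \<and> (\<forall>t. sets (F t) \<subseteq> sets M) \<and>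
     (\<forall>t\<ge>0. X t \<in> measurable (F t) (count_space UNIV \<Otimes>\<^sub>M borel)) \<and>
     (\<forall>\<omega>\<in>space M. \<forall>t\<ge>0. sp_point N (X t \<omega>)) \<and>
     (\<forall>\<omega>\<in>space M. snd (X 0 \<omega>) = 0) \<and>
     (\<forall>\<omega>\<in>space M. sp_continuous_path (\<lambda>t. X t \<omega>)) \<and>
     (\<forall>f f1 f2. sp_gen_domain N f f1 f2 \<longrightarrow>
        is_martingale M F (\<lambda>t \<omega>. f (fst (X t \<omega>)) (snd (X t \<omega>)) - f (fst (X 0 \<omega>)) (snd (X 0 \<omega>))
           - integral {0..t} (\<lambda>r. f2 (fst (X r \<omega>)) (snd (X r \<omega>)) / 2)))"

definition hit_set :: "nat \<Rightarrow> (nat \<Rightarrow> real) \<Rightarrow> (real \<Rightarrow> 'a \<Rightarrow> nat \<times> real) \<Rightarrow> 'a \<Rightarrow> real set" where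
  "hit_set N L X \<omega> = {t. t \<ge> 0 \<and> (\<exists>i<N. X t \<omega> = (i, L i))}"

definition hit_time :: "nat \<Rightarrow> (nat \<Rightarrow> real) \<Rightarrow> (real \<Rightarrow> 'a \<Rightarrow> nat \<times> real) \<Rightarrow> 'a \<Rightarrow> real" where
  "hit_time N L X \<omega> = Inf (hit_set N L X \<omega>)"

text \<open>exp(-lam * tau), with the convention exp(-lam * \<infinity>) = 0 if the set is never hit.\<close>
definition exp_hit :: "real \<Rightarrow> nat \<Rightarrow> (nat \<Rightarrow> real) \<Rightarrow> (real \<Rightarrow> 'a \<Rightarrow> nat \<times> real) \<Rightarrow> 'a \<Rightarrow> real" where
  "exp_hit lam N L X \<omega> =
     (if hit_set N L X \<omega> = {} then 0 else exp (- lam * hit_time N L X \<omega>))"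

end

theory Submission
  imports Defs
begin

(* Let k = sqrt (2 lam). On leg i put u_i(x) = a cosh (k x) + c_i sinh (k x), where c_i makes
   u_i(L_i) = 1 and a is fixed by Kirchhoff's condition sum_i c_i = 0; a is the right-hand side of
   the theorem. Continued smoothly beyond L_i, u lies in the generator domain, so
   Y_t = u(b_t) - u(b_0) - int_0^t u''(b_r)/2 dr is a martingale, and so is its discounted version
   int_0^t exp (-lam r) dY_r. Before the hitting time tau the path stays where u''/2 = lam u, so at
   rho = min T tau the discounted martingale equals exp (-lam rho) u(b_rho) - a. Optional stopping at
   the bounded time rho gives E exp (-lam rho) u(b_rho) = a, and as T goes to infinity dominated
   convergence together with u(b_tau) = 1 yields E exp (-lam tau) = a. *)

section \<open>Functions on the spider\<close>

definition leg_coord :: "nat \<Rightarrow> nat \<times> real \<Rightarrow> real" where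
  "leg_coord i p = (if fst p = i then snd p else 0)"

lemma leg_coord_nonneg: "sp_point N p \<Longrightarrow> 0 \<le> leg_coord i p"
  by (auto simp: leg_coord_def sp_point_def)

lemma leg_coord_lipschitz:
  "sp_point N p \<Longrightarrow> sp_point N q \<Longrightarrow> \<bar>leg_coord i p - leg_coord i q\<bar> \<le> sp_dist p q"
  by (auto simp: leg_coord_def sp_point_def sp_dist_def)

lemma continuous_on_leg_coord:
  assumes w: "sp_continuous_path w" and pts: "\<And>t. 0 \<le> t \<Longrightarrow> sp_point N (w t)"
  shows "continuous_on {0..} (\<lambda>t. leg_coord i (w t))"
  unfolding continuous_on_iff
proof (intro ballI allI impI)
  fix t e :: real assume t: "t \<in> {0..}" and e: "0 < e"
  then obtain d where "0 < d" and d: "\<And>s. 0 \<le> s \<Longrightarrow> \<bar>s - t\<bar> < d \<Longrightarrow> sp_dist (w s) (w t) < e"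
    using w unfolding sp_continuous_path_def by (meson atLeast_iff)
  have "dist (leg_coord i (w s)) (leg_coord i (w t)) < e" if "s \<in> {0..}" "dist s t < d" for s
    using leg_coord_lipschitz[OF pts pts, of s t i] d[of s] that t by (auto simp: dist_real_def)
  with \<open>0 < d\<close> show "\<exists>d>0. \<forall>s\<in>{0..}. dist s t < d \<longrightarrow> dist (leg_coord i (w s)) (leg_coord i (w t)) < e"
    by blast
qed

lemma spider_fun_eq_sum_legs:
  fixes g :: "nat \<Rightarrow> real \<Rightarrow> real"
  assumes p: "sp_point N p" and g: "\<forall>i<N. g i 0 = g 0 0"
  shows "g (fst p) (snd p) = g 0 0 + (\<Sum>i<N. g i (leg_coord i p) - g i 0)"
proof -
  have j: "fst p \<in> {..<N}" using p by (simp add: sp_point_def)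
  have "(\<Sum>i\<in>{..<N} - {fst p}. g i (leg_coord i p) - g i 0) = 0"
    by (rule sum.neutral) (simp add: leg_coord_def)
  then have "(\<Sum>i<N. g i (leg_coord i p) - g i 0) = g (fst p) (snd p) - g (fst p) 0"
    by (simp add: sum.remove[OF finite_lessThan j] leg_coord_def)
  moreover have "g (fst p) 0 = g 0 0" using g j by blast
  ultimately show ?thesis by simp
qed

lemma continuous_on_spider_fun:
  fixes g :: "nat \<Rightarrow> real \<Rightarrow> real"
  assumes w: "sp_continuous_path w" and pts: "\<And>t. 0 \<le> t \<Longrightarrow> sp_point N (w t)"
    and g: "\<forall>i<N. g i 0 = g 0 0" "\<And>i. i < N \<Longrightarrow> continuous_on {0..} (g i)"
  shows "continuous_on {0..} (\<lambda>t. g (fst (w t)) (snd (w t)))"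
proof -
  have "continuous_on {0..} (\<lambda>t. g i (leg_coord i (w t)))" if "i < N" for i
    using continuous_on_compose2[OF g(2)[OF that] continuous_on_leg_coord[OF w pts]]
      leg_coord_nonneg[OF pts] by auto
  then have "continuous_on {0..} (\<lambda>t. g 0 0 + (\<Sum>i<N. g i (leg_coord i (w t)) - g i 0))"
    by (intro continuous_intros) auto
  then show ?thesis
  proof (rule continuous_on_eq)
    show "g 0 0 + (\<Sum>i<N. g i (leg_coord i (w t)) - g i 0) = g (fst (w t)) (snd (w t))"
      if "t \<in> {0..}" for t
      using that by (intro spider_fun_eq_sum_legs[symmetric] pts g(1)) simp
  qed
qed

section \<open>A bounded \<open>C\<^sup>2\<close> continuation\<close>

lemma has_real_derivative_if_le:
  fixes f g f' g' :: "real \<Rightarrow> real"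
  assumes "\<And>x. (f has_real_derivative f' x) (at x)" "\<And>x. (g has_real_derivative g' x) (at x)"
    and "f L = g L" "f' L = g' L"
  shows "((\<lambda>x. if x \<le> L then f x else g x) has_real_derivative (if x \<le> L then f' x else g' x)) (at x)"
proof -
  have "((\<lambda>x. if x \<in> {..L} then f x else g x) has_vector_derivative
      (if x \<in> {..L} then f' x else g' x)) (at x within UNIV)"
    by (rule has_vector_derivative_If_within_closures[where T="{L<..}"])
       (use assms in \<open>auto simp: has_real_derivative_iff_has_vector_derivative[symmetric]
          intro: has_field_derivative_at_within\<close>)
  then show ?thesis by (simp add: has_real_derivative_iff_has_vector_derivative)
qed

lemma bounded_image_if_le:
  fixes f g :: "real \<Rightarrow> real"
  assumes "continuous_on {0..L} f" "bounded (range g)"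
  shows "bounded ((\<lambda>x. if x \<le> L then f x else g x) ` {0..})"
proof -
  have "(\<lambda>x. if x \<le> L then f x else g x) ` {0..} \<subseteq> f ` {0..L} \<union> range g" by auto
  moreover have "bounded (f ` {0..L})"
    by (intro compact_imp_bounded compact_continuous_image assms(1) compact_Icc)
  ultimately show ?thesis using assms(2) bounded_Un bounded_subset by metis
qed

lemma bounded_range_trig: "bounded (range (\<lambda>x::real. a + b * sin (x - L) + c * cos (x - L)))"
  unfolding bounded_real
proof (intro exI allI impI, clarify)
  fix x :: real
  have "\<bar>b * sin (x - L)\<bar> \<le> \<bar>b\<bar>" "\<bar>c * cos (x - L)\<bar> \<le> \<bar>c\<bar>"
    by (simp_all add: abs_mult mult_left_le)
  then show "\<bar>a + b * sin (x - L) + c * cos (x - L)\<bar> \<le> \<bar>a\<bar> + \<bar>b\<bar> + \<bar>c\<bar>" by linarith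
qed

(* Beyond L, h is continued by a trigonometric polynomial matching h, h' and h'' at L, so the result
   is C^2 and bounded with its first two derivatives, as the generator domain requires. *)

definition extend_C2 :: "(real \<Rightarrow> real) \<Rightarrow> (real \<Rightarrow> real) \<Rightarrow> (real \<Rightarrow> real) \<Rightarrow> real \<Rightarrow> real \<Rightarrow> real" where
  "extend_C2 h h1 h2 L x =
     (if x \<le> L then h x else h L + h1 L * sin (x - L) + h2 L * (1 - cos (x - L)))"

definition extend_C2' :: "(real \<Rightarrow> real) \<Rightarrow> (real \<Rightarrow> real) \<Rightarrow> real \<Rightarrow> real \<Rightarrow> real" where
  "extend_C2' h1 h2 L x = (if x \<le> L then h1 x else h1 L * cos (x - L) + h2 L * sin (x - L))"

definition extend_C2'' :: "(real \<Rightarrow> real) \<Rightarrow> (real \<Rightarrow> real) \<Rightarrow> real \<Rightarrow> real \<Rightarrow> real" where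
  "extend_C2'' h1 h2 L x = (if x \<le> L then h2 x else h2 L * cos (x - L) - h1 L * sin (x - L))"

lemma has_real_derivative_extend_C2:
  assumes "\<And>x. (h has_real_derivative h1 x) (at x)"
  shows "(extend_C2 h h1 h2 L has_real_derivative extend_C2' h1 h2 L x) (at x)"
  unfolding extend_C2_def[abs_def] extend_C2'_def
  by (rule has_real_derivative_if_le[OF assms]) (auto intro!: derivative_eq_intros)

lemma has_real_derivative_extend_C2':
  assumes "\<And>x. (h1 has_real_derivative h2 x) (at x)"
  shows "(extend_C2' h1 h2 L has_real_derivative extend_C2'' h1 h2 L x) (at x)"
  unfolding extend_C2'_def[abs_def] extend_C2''_def
  by (rule has_real_derivative_if_le[OF assms]) (auto intro!: derivative_eq_intros)

lemma continuous_on_extend_C2'':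
  assumes "continuous_on UNIV h2"
  shows "continuous_on UNIV (extend_C2'' h1 h2 L)"
proof -
  have "continuous_on ({..L} \<union> {L..}) (extend_C2'' h1 h2 L)"
    unfolding extend_C2''_def[abs_def]
    by (intro continuous_on_cases continuous_intros continuous_on_subset[OF assms]) auto
  moreover have "{..L} \<union> {L..} = (UNIV :: real set)" by auto
  ultimately show ?thesis by simp
qed

lemma bounded_extend_C2:
  assumes "continuous_on {0..L} h" "continuous_on {0..L} h1" "continuous_on {0..L} h2"
  shows "bounded (extend_C2 h h1 h2 L ` {0..})" "bounded (extend_C2' h1 h2 L ` {0..})"
    "bounded (extend_C2'' h1 h2 L ` {0..})"
proof -
  have tail: "(\<lambda>x. h L + h1 L * sin (x - L) + h2 L * (1 - cos (x - L)))
      = (\<lambda>x. (h L + h2 L) + h1 L * sin (x - L) + (- h2 L) * cos (x - L))"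
    "(\<lambda>x. h1 L * cos (x - L) + h2 L * sin (x - L))
      = (\<lambda>x. 0 + h2 L * sin (x - L) + h1 L * cos (x - L))"
    "(\<lambda>x. h2 L * cos (x - L) - h1 L * sin (x - L))
      = (\<lambda>x. 0 + (- h1 L) * sin (x - L) + h2 L * cos (x - L))"
    by (simp_all add: algebra_simps)
  show "bounded (extend_C2 h h1 h2 L ` {0..})"
    unfolding extend_C2_def[abs_def] by (intro bounded_image_if_le assms) (simp only: tail bounded_range_trig)
  show "bounded (extend_C2' h1 h2 L ` {0..})"
    unfolding extend_C2'_def[abs_def] by (intro bounded_image_if_le assms) (simp only: tail bounded_range_trig)
  show "bounded (extend_C2'' h1 h2 L ` {0..})"
    unfolding extend_C2''_def[abs_def] by (intro bounded_image_if_le assms) (simp only: tail bounded_range_trig)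
qed

lemma bounded_extend_C2_legs:
  fixes h h1 h2 :: "nat \<Rightarrow> real \<Rightarrow> real"
  assumes deriv: "\<And>i x. i < N \<Longrightarrow> (h i has_real_derivative h1 i x) (at x)"
      "\<And>i x. i < N \<Longrightarrow> (h1 i has_real_derivative h2 i x) (at x)"
    and cont: "\<And>i. i < N \<Longrightarrow> continuous_on UNIV (h2 i)"
  shows "\<exists>B. \<forall>i<N. \<forall>x\<ge>0. \<bar>extend_C2 (h i) (h1 i) (h2 i) (L i) x\<bar> \<le> B
    \<and> \<bar>extend_C2' (h1 i) (h2 i) (L i) x\<bar> \<le> B \<and> \<bar>extend_C2'' (h1 i) (h2 i) (L i) x\<bar> \<le> B"
proof -
  have "continuous_on UNIV (h i)" "continuous_on UNIV (h1 i)" if "i < N" for i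
    using deriv[OF that] by (auto intro!: continuous_at_imp_continuous_on DERIV_isCont)
  then have "continuous_on {0..L i} (h i)" "continuous_on {0..L i} (h1 i)"
      "continuous_on {0..L i} (h2 i)" if "i < N" for i
    using cont[OF that] that by (meson continuous_on_subset subset_UNIV)+
  note bounded_extend_C2[OF this]
  then have "bounded (\<Union>i<N. extend_C2 (h i) (h1 i) (h2 i) (L i) ` {0..}
      \<union> extend_C2' (h1 i) (h2 i) (L i) ` {0..} \<union> extend_C2'' (h1 i) (h2 i) (L i) ` {0..})"
    by (intro bounded_UN bounded_Un) auto
  then obtain B where "\<forall>y \<in> (\<Union>i<N. extend_C2 (h i) (h1 i) (h2 i) (L i) ` {0..}
      \<union> extend_C2' (h1 i) (h2 i) (L i) ` {0..} \<union> extend_C2'' (h1 i) (h2 i) (L i) ` {0..}). \<bar>y\<bar> \<le> B"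
    unfolding bounded_real by blast
  then show ?thesis by (intro exI[of _ B]) auto
qed

lemma sp_gen_domain_extend_C2:
  fixes h h1 h2 :: "nat \<Rightarrow> real \<Rightarrow> real"
  assumes deriv: "\<And>i x. i < N \<Longrightarrow> (h i has_real_derivative h1 i x) (at x)"
      "\<And>i x. i < N \<Longrightarrow> (h1 i has_real_derivative h2 i x) (at x)"
    and cont: "\<And>i. i < N \<Longrightarrow> continuous_on UNIV (h2 i)"
    and L: "\<forall>i<N. 0 \<le> L i"
    and glue: "\<forall>i<N. h i 0 = h 0 0" "\<forall>i<N. h2 i 0 = h2 0 0"
    and kirchhoff: "(\<Sum>i<N. h1 i 0) = 0"
  shows "sp_gen_domain N (\<lambda>i. extend_C2 (h i) (h1 i) (h2 i) (L i))
    (\<lambda>i. extend_C2' (h1 i) (h2 i) (L i)) (\<lambda>i. extend_C2'' (h1 i) (h2 i) (L i))"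
  unfolding sp_gen_domain_def
proof (intro conjI allI impI)
  fix i assume i: "i < N"
  have "0 < N" using i by simp
  then have "0 \<le> L i" "0 \<le> L 0" using i L by blast+
  moreover have "h i 0 = h 0 0" "h2 i 0 = h2 0 0" using i glue by blast+
  ultimately show "extend_C2 (h i) (h1 i) (h2 i) (L i) 0 = extend_C2 (h 0) (h1 0) (h2 0) (L 0) 0"
    and "extend_C2'' (h1 i) (h2 i) (L i) 0 = extend_C2'' (h1 0) (h2 0) (L 0) 0"
    by (simp_all add: extend_C2_def extend_C2''_def)
  show "continuous_on {0..} (extend_C2'' (h1 i) (h2 i) (L i))"
    using continuous_on_extend_C2''[OF cont[OF i]] by (rule continuous_on_subset) simp
  fix x :: real
  show "(extend_C2 (h i) (h1 i) (h2 i) (L i) has_real_derivative extend_C2' (h1 i) (h2 i) (L i) x)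
      (at x within {0..})"
    using has_real_derivative_extend_C2[OF deriv(1)[OF i]] by (rule has_field_derivative_at_within)
  show "(extend_C2' (h1 i) (h2 i) (L i) has_real_derivative extend_C2'' (h1 i) (h2 i) (L i) x)
      (at x within {0..})"
    using has_real_derivative_extend_C2'[OF deriv(2)[OF i]] by (rule has_field_derivative_at_within)
next
  have "(\<Sum>i<N. extend_C2' (h1 i) (h2 i) (L i) 0) = (\<Sum>i<N. h1 i 0)"
    using L by (intro sum.cong) (auto simp: extend_C2'_def)
  with kirchhoff show "(\<Sum>i<N. extend_C2' (h1 i) (h2 i) (L i) 0) = 0" by simp
qed (rule bounded_extend_C2_legs[OF deriv cont])

section \<open>Solutions of \<open>u'' = k\<^sup>2 u\<close> on the legs\<close>

(* laplace_leg solves u'' = k^2 u on each leg with value 1 at x = L i; the common value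
   laplace_origin at the origin is the one for which Kirchhoff's condition holds. *)

definition laplace_origin :: "nat \<Rightarrow> (nat \<Rightarrow> real) \<Rightarrow> real \<Rightarrow> real" where
  "laplace_origin N L k =
     (\<Sum>i<N. 1 / sinh (k * L i)) / (\<Sum>i<N. cosh (k * L i) / sinh (k * L i))"

definition laplace_coeff :: "nat \<Rightarrow> (nat \<Rightarrow> real) \<Rightarrow> real \<Rightarrow> nat \<Rightarrow> real" where
  "laplace_coeff N L k i = (1 - laplace_origin N L k * cosh (k * L i)) / sinh (k * L i)"

definition laplace_leg :: "nat \<Rightarrow> (nat \<Rightarrow> real) \<Rightarrow> real \<Rightarrow> nat \<Rightarrow> real \<Rightarrow> real" where
  "laplace_leg N L k i x = laplace_origin N L k * cosh (k * x) + laplace_coeff N L k i * sinh (k * x)"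

definition laplace_leg' :: "nat \<Rightarrow> (nat \<Rightarrow> real) \<Rightarrow> real \<Rightarrow> nat \<Rightarrow> real \<Rightarrow> real" where
  "laplace_leg' N L k i x = k * (laplace_origin N L k * sinh (k * x) + laplace_coeff N L k i * cosh (k * x))"

lemma has_real_derivative_laplace_leg:
  "(laplace_leg N L k i has_real_derivative laplace_leg' N L k i x) (at x)"
  unfolding laplace_leg_def[abs_def] laplace_leg'_def
  by (auto intro!: derivative_eq_intros simp: algebra_simps)

lemma has_real_derivative_laplace_leg':
  "(laplace_leg' N L k i has_real_derivative k\<^sup>2 * laplace_leg N L k i x) (at x)"
  unfolding laplace_leg_def laplace_leg'_def[abs_def]
  by (auto intro!: derivative_eq_intros simp: algebra_simps power2_eq_square)

lemma laplace_leg_origin: "laplace_leg N L k i 0 = laplace_origin N L k"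
  by (simp add: laplace_leg_def)

lemma laplace_leg_end: "0 < k \<Longrightarrow> 0 < L i \<Longrightarrow> laplace_leg N L k i (L i) = 1"
  by (simp add: laplace_leg_def laplace_coeff_def field_simps)

lemma laplace_kirchhoff:
  assumes "0 < N" "\<forall>i<N. 0 < L i" "0 < k"
  shows "(\<Sum>i<N. laplace_leg' N L k i 0) = 0"
proof -
  have pos: "(\<Sum>i<N. cosh (k * L i) / sinh (k * L i)) > 0"
    using assms by (intro sum_pos) auto
  have "(\<Sum>i<N. laplace_coeff N L k i)
      = (\<Sum>i<N. 1 / sinh (k * L i)) - laplace_origin N L k * (\<Sum>i<N. cosh (k * L i) / sinh (k * L i))"
    by (simp add: laplace_coeff_def diff_divide_distrib sum_subtractf sum_distrib_left)
  also have "\<dots> = 0"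
    using pos by (simp add: laplace_origin_def)
  finally show ?thesis by (simp add: laplace_leg'_def sum_distrib_left[symmetric])
qed

section \<open>Integrals over time of random continuous functions\<close>

definition grid_ceiling :: "real \<Rightarrow> real \<Rightarrow> real" where
  "grid_ceiling h x = h * of_int \<lceil>x / h\<rceil>"

lemma grid_ceiling_bounds:
  assumes "0 < h"
  shows "x \<le> grid_ceiling h x" "grid_ceiling h x < x + h"
proof -
  have "x = h * (x / h)" "x + h = h * (x / h + 1)" using assms by (simp_all add: field_simps)
  moreover have "x / h \<le> of_int \<lceil>x / h\<rceil>" "of_int \<lceil>x / h\<rceil> < x / h + 1" by linarith+
  ultimately show "x \<le> grid_ceiling h x" "grid_ceiling h x < x + h"
    unfolding grid_ceiling_def using assms by (metis mult_left_mono less_imp_le, metis mult_strict_left_mono)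
qed

lemma grid_ceiling_eq_iff:
  assumes "0 < h"
  shows "grid_ceiling h x = h * of_int j \<longleftrightarrow> h * of_int j - h < x \<and> x \<le> h * of_int j"
proof -
  have "grid_ceiling h x = h * of_int j \<longleftrightarrow> \<lceil>x / h\<rceil> = j"
    using assms by (simp add: grid_ceiling_def)
  also have "\<dots> \<longleftrightarrow> of_int j - 1 < x / h \<and> x / h \<le> of_int j"
    by (simp add: ceiling_eq_iff)
  also have "\<dots> \<longleftrightarrow> h * of_int j - h < x \<and> x \<le> h * of_int j"
    using assms by (simp add: field_simps)
  finally show ?thesis .
qed

lemma grid_ceiling_tendsto:
  assumes "0 < c"
  shows "(\<lambda>n. grid_ceiling (c / real (Suc n)) x) \<longlonglongrightarrow> x"
proof (rule tendsto_sandwich[OF _ _ tendsto_const])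
  have "0 < c / real (Suc n)" for n using assms by simp
  note bounds = grid_ceiling_bounds[OF this]
  show "\<forall>\<^sub>F n in sequentially. x \<le> grid_ceiling (c / real (Suc n)) x"
    using bounds(1) by simp
  show "\<forall>\<^sub>F n in sequentially. grid_ceiling (c / real (Suc n)) x \<le> x + c / real (Suc n)"
    using bounds(2) by (simp add: less_imp_le)
  have "(\<lambda>n. x + c * inverse (real (Suc n))) \<longlonglongrightarrow> x + c * 0"
    by (intro tendsto_intros LIMSEQ_inverse_real_of_nat)
  then show "(\<lambda>n. x + c / real (Suc n)) \<longlonglongrightarrow> x" by (simp add: divide_inverse)
qed

definition uniform_grid :: "real \<Rightarrow> nat \<Rightarrow> real set" where
  "uniform_grid T n = (\<lambda>j. T / real (Suc n) * real j) ` {..Suc n}"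

lemma finite_uniform_grid: "finite (uniform_grid T n)"
  by (simp add: uniform_grid_def)

lemma uniform_grid_subset:
  assumes "0 \<le> T"
  shows "uniform_grid T n \<subseteq> {0..T}"
proof -
  have "T / real (Suc n) * real j \<le> T / real (Suc n) * real (Suc n)" if "j \<le> Suc n" for j
    using assms that by (intro mult_left_mono) auto
  then show ?thesis using assms by (auto simp: uniform_grid_def)
qed

lemma grid_ceiling_in_uniform_grid:
  assumes "0 < T" "x \<in> {0..T}"
  shows "grid_ceiling (T / real (Suc n)) x \<in> uniform_grid T n"
proof -
  let ?h = "T / real (Suc n)"
  have "x / ?h = x / T * real (Suc n)" by simp
  moreover have "x / T * real (Suc n) \<le> 1 * real (Suc n)" "0 \<le> x / T * real (Suc n)"
    using assms by (intro mult_right_mono mult_nonneg_nonneg; simp)+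
  ultimately have lower: "0 \<le> x / ?h" and upper: "x / ?h \<le> real (Suc n)"
    by (simp_all only: mult_1)
  have "0 \<le> \<lceil>x / ?h\<rceil>" unfolding zero_le_ceiling using lower by linarith
  then obtain j where j: "\<lceil>x / ?h\<rceil> = int j" by (metis nonneg_int_cases)
  have "int j \<le> int (Suc n)" unfolding j[symmetric] ceiling_le_iff using upper by simp
  moreover have "grid_ceiling ?h x = ?h * real j" unfolding grid_ceiling_def j by simp
  ultimately show ?thesis unfolding uniform_grid_def by auto
qed

lemma borel_measurable_caratheodory:
  fixes Y :: "real \<Rightarrow> 'a \<Rightarrow> real"
  assumes "a \<le> b" and meas: "\<And>r. r \<in> {a..b} \<Longrightarrow> Y r \<in> borel_measurable M"
    and cont: "\<And>\<omega>. \<omega> \<in> space M \<Longrightarrow> continuous_on {a..b} (\<lambda>r. Y r \<omega>)"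
  shows "(\<lambda>z. Y (fst z) (snd z)) \<in> borel_measurable (restrict_space lborel {a..b} \<Otimes>\<^sub>M M)"
proof -
  define r where "r n x = max a (min b (a + grid_ceiling (1 / real (Suc n)) (x - a)))" for n x
  let ?T = "restrict_space lborel {a..b}"
  show ?thesis
  proof (rule borel_measurable_LIMSEQ_real[where u="\<lambda>n z. Y (r n (fst z)) (snd z)"])
    fix n
    show "(\<lambda>z. Y (r n (fst z)) (snd z)) \<in> borel_measurable (?T \<Otimes>\<^sub>M M)"
      unfolding r_def grid_ceiling_def
    proof (rule measurable_compose_countable'[where I=UNIV
          and f="\<lambda>j z. Y (max a (min b (a + 1 / real (Suc n) * of_int j))) (snd z)"
          and g="\<lambda>z. \<lceil>(fst z - a) / (1 / real (Suc n))\<rceil>"])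
      show "(\<lambda>z. Y (max a (min b (a + 1 / real (Suc n) * of_int j))) (snd z)) \<in> borel_measurable (?T \<Otimes>\<^sub>M M)"
        for j :: int
        using \<open>a \<le> b\<close> by (intro measurable_compose[OF measurable_snd] meas) auto
      have "fst \<in> borel_measurable (?T \<Otimes>\<^sub>M M)"
        by (rule measurable_compose[OF measurable_fst]) (simp add: measurable_restrict_space1)
      then show "(\<lambda>z. \<lceil>(fst z - a) / (1 / real (Suc n))\<rceil>) \<in> measurable (?T \<Otimes>\<^sub>M M) (count_space UNIV)"
        by measurable
    qed simp_all
  next
    fix z assume "z \<in> space (?T \<Otimes>\<^sub>M M)"
    then have z: "fst z \<in> {a..b}" "snd z \<in> space M" by (auto simp: space_pair_measure)
    have "(\<lambda>n. r n (fst z)) \<longlonglongrightarrow> max a (min b (a + (fst z - a)))"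
      unfolding r_def by (intro tendsto_intros grid_ceiling_tendsto) simp
    moreover have "max a (min b (a + (fst z - a))) = fst z" using z(1) by simp
    moreover have "r n (fst z) \<in> {a..b}" for n
      using \<open>a \<le> b\<close> by (simp add: r_def)
    ultimately show "(\<lambda>n. Y (r n (fst z)) (snd z)) \<longlonglongrightarrow> Y (fst z) (snd z)"
      by (intro continuous_on_tendsto_compose[OF cont[OF z(2)]]) (use z(1) in auto)
  qed
qed

lemma integral_restrict_Icc:
  fixes f :: "real \<Rightarrow> real"
  assumes "set_integrable lborel {a..b} f"
  shows "(\<integral>x. f x \<partial>restrict_space lborel {a..b}) = integral {a..b} f"
proof -
  have "(\<integral>x. f x \<partial>restrict_space lborel {a..b}) = (LINT x:{a..b}|lborel. f x)"
    unfolding set_lebesgue_integral_def by (rule integral_restrict_space) simp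
  also have "\<dots> = integral {a..b} f" by (rule set_borel_integral_eq_integral(2)[OF assms])
  finally show ?thesis .
qed

lemma
  fixes Y :: "real \<Rightarrow> 'a \<Rightarrow> real"
  assumes "a \<le> b" and meas: "\<And>r. r \<in> {a..b} \<Longrightarrow> Y r \<in> borel_measurable M"
    and cont: "\<And>\<omega>. \<omega> \<in> space M \<Longrightarrow> continuous_on {a..b} (\<lambda>r. Y r \<omega>)"
  shows borel_measurable_integral_Icc: "(\<lambda>\<omega>. integral {a..b} (\<lambda>r. Y r \<omega>)) \<in> borel_measurable M"
    and integral_integral_Icc_swap:
      "finite_measure M \<Longrightarrow> (\<And>r \<omega>. r \<in> {a..b} \<Longrightarrow> \<omega> \<in> space M \<Longrightarrow> \<bar>Y r \<omega>\<bar> \<le> C) \<Longrightarrow>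
        (\<integral>\<omega>. integral {a..b} (\<lambda>r. Y r \<omega>) \<partial>M) = integral {a..b} (\<lambda>r. \<integral>\<omega>. Y r \<omega> \<partial>M)"
proof -
  define T where "T = restrict_space lborel {a..b}"
  have "emeasure T (space T) = ennreal (b - a)"
    using \<open>a \<le> b\<close> by (simp add: T_def emeasure_restrict_space)
  then interpret T: finite_measure T by (intro finite_measureI) simp
  have Y: "(\<lambda>z. Y (fst z) (snd z)) \<in> borel_measurable (T \<Otimes>\<^sub>M M)"
    unfolding T_def by (rule borel_measurable_caratheodory[OF \<open>a \<le> b\<close> meas cont])
  have inner: "integral {a..b} (\<lambda>r. Y r \<omega>) = (\<integral>r. Y r \<omega> \<partial>T)" if "\<omega> \<in> space M" for \<omega>
    unfolding T_def by (rule integral_restrict_Icc[symmetric])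
      (unfold set_integrable_def, intro borel_integrable_compact compact_Icc cont that)
  have "(\<lambda>\<omega>. \<integral>r. Y r \<omega> \<partial>T) \<in> borel_measurable M"
    using Y by (intro T.borel_measurable_lebesgue_integral, subst measurable_pair_swap_iff)
      (simp add: case_prod_beta)
  then show meas_int: "(\<lambda>\<omega>. integral {a..b} (\<lambda>r. Y r \<omega>)) \<in> borel_measurable M"
    by (rule measurable_cong[THEN iffD1, rotated]) (simp add: inner)
  assume "finite_measure M" and bound: "\<And>r \<omega>. r \<in> {a..b} \<Longrightarrow> \<omega> \<in> space M \<Longrightarrow> \<bar>Y r \<omega>\<bar> \<le> C"
  interpret M: finite_measure M by fact
  interpret pair_sigma_finite T M ..
  have "finite_measure (T \<Otimes>\<^sub>M M)"
    by (rule finite_measure_pair_measure) (fact M.finite_measure_axioms T.finite_measure_axioms)+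
  moreover have "AE z in T \<Otimes>\<^sub>M M. norm (Y (fst z) (snd z)) \<le> C"
    by (rule AE_I2) (auto simp: space_pair_measure T_def intro: bound)
  ultimately have "integrable (T \<Otimes>\<^sub>M M) (\<lambda>z. Y (fst z) (snd z))"
    using Y by (intro finite_measure.integrable_const_bound)
  moreover have "(\<lambda>(r, \<omega>). Y r \<omega>) = (\<lambda>z. Y (fst z) (snd z))" by (simp add: fun_eq_iff)
  ultimately have int: "integrable (T \<Otimes>\<^sub>M M) (\<lambda>(r, \<omega>). Y r \<omega>)" by simp
  have "(\<integral>\<omega>. integral {a..b} (\<lambda>r. Y r \<omega>) \<partial>M) = (\<integral>\<omega>. (\<integral>r. Y r \<omega> \<partial>T) \<partial>M)"
    by (rule Bochner_Integration.integral_cong) (simp_all add: inner)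
  also have "\<dots> = (\<integral>r. (\<integral>\<omega>. Y r \<omega> \<partial>M) \<partial>T)"
    by (rule Fubini_integral[OF int])
  also have "\<dots> = integral {a..b} (\<lambda>r. \<integral>\<omega>. Y r \<omega> \<partial>M)"
    using integrable_fst'[OF int] unfolding T_def
    by (intro integral_restrict_Icc) (simp add: integrable_restrict_space set_integrable_def)
  finally show "(\<integral>\<omega>. integral {a..b} (\<lambda>r. Y r \<omega>) \<partial>M) = integral {a..b} (\<lambda>r. \<integral>\<omega>. Y r \<omega> \<partial>M)" .
qed

section \<open>Discounting\<close>

lemma integral_exp_neg:
  fixes lam :: real
  assumes "s \<le> t"
  shows "lam * integral {s..t} (\<lambda>r. exp (- lam * r)) = exp (- lam * s) - exp (- lam * t)"
proof (cases "lam = 0")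
  case False
  have "((\<lambda>r. exp (- lam * r)) has_integral (- exp (- lam * t) / lam - - exp (- lam * s) / lam)) {s..t}"
  proof (rule fundamental_theorem_of_calculus[OF assms])
    fix x :: real
    have "((\<lambda>r. - exp (- lam * r) / lam) has_real_derivative exp (- lam * x)) (at x within {s..t})"
      using False by (auto intro!: derivative_eq_intros)
    then show "((\<lambda>r. - exp (- lam * r) / lam) has_vector_derivative exp (- lam * x)) (at x within {s..t})"
      by (simp add: has_real_derivative_iff_has_vector_derivative)
  qed
  then show ?thesis using False by (simp add: integral_unique field_simps)
qed simp

(* Integration by parts gives discount lam y t = y 0 + int_0^t exp (-lam r) y'(r) dr for differentiable y;
   for a martingale y it is the stochastic integral int_0^t exp (-lam r) dy(r). *)

definition discount :: "real \<Rightarrow> (real \<Rightarrow> real) \<Rightarrow> real \<Rightarrow> real" where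
  "discount lam y t = exp (- lam * t) * y t + lam * integral {0..t} (\<lambda>r. exp (- lam * r) * y r)"

lemma discount_0 [simp]: "discount lam y 0 = y 0"
  by (simp add: discount_def)

lemma continuous_on_discount:
  assumes "continuous_on {0..T} y"
  shows "continuous_on {0..T} (discount lam y)"
  unfolding discount_def[abs_def]
  by (intro continuous_intros assms indefinite_integral_continuous_1 integrable_continuous_interval)

lemma abs_discount_le:
  assumes "0 \<le> lam" "0 \<le> t" "continuous_on {0..t} y" "\<And>r. r \<in> {0..t} \<Longrightarrow> \<bar>y r\<bar> \<le> C"
  shows "\<bar>discount lam y t\<bar> \<le> (1 + lam * t) * C"
proof -
  have exp_le: "exp (- lam * r) \<le> 1" if "0 \<le> r" for r using assms(1) that by simp
  have bound: "\<bar>exp (- lam * r) * y r\<bar> \<le> C" if "r \<in> {0..t}" for r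
  proof -
    have "\<bar>exp (- lam * r) * y r\<bar> \<le> 1 * \<bar>y r\<bar>"
      unfolding abs_mult using exp_le[of r] that by (intro mult_right_mono) auto
    then show ?thesis using assms(4)[OF that] by simp
  qed
  have "\<bar>integral {0..t} (\<lambda>r. exp (- lam * r) * y r)\<bar> \<le> C * (t - 0)"
    using integral_bound[OF assms(2), of "\<lambda>r. exp (- lam * r) * y r" C] bound assms(3)
    by (simp add: continuous_intros)
  then have "\<bar>lam * integral {0..t} (\<lambda>r. exp (- lam * r) * y r)\<bar> \<le> lam * (C * t)"
    using assms(1) by (simp add: abs_mult mult_left_mono)
  moreover have "\<bar>exp (- lam * t) * y t\<bar> \<le> C" using bound assms(2) by simp
  ultimately show ?thesis unfolding discount_def by (simp add: algebra_simps)
qed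

lemma discount_eigen:
  fixes \<phi> \<psi> :: "real \<Rightarrow> real"
  assumes "0 \<le> p" and \<phi>: "continuous_on {0..p} \<phi>" and \<psi>: "\<And>r. r \<in> {0..p} \<Longrightarrow> \<psi> r = lam * \<phi> r"
  shows "discount lam (\<lambda>t. \<phi> t - \<phi> 0 - integral {0..t} \<psi>) p = exp (- lam * p) * \<phi> p - \<phi> 0"
proof -
  define I where "I t = integral {0..t} \<psi>" for t
  define y where "y t = \<phi> t - \<phi> 0 - I t" for t
  define K where "K t = integral {0..t} (\<lambda>r. exp (- lam * r) * y r)" for t
  define D where "D t = exp (- lam * t) * (- \<phi> 0 - I t) + lam * K t + \<phi> 0" for t
  have D_eq: "discount lam y t = exp (- lam * t) * \<phi> t - \<phi> 0 + D t" for t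
    unfolding D_def K_def y_def discount_def by (simp add: algebra_simps)
  have \<psi>_cont: "continuous_on {0..p} \<psi>"
    by (rule continuous_on_eq[where f="\<lambda>r. lam * \<phi> r"]) (simp_all add: \<psi> \<phi> continuous_intros)
  have y_cont: "continuous_on {0..p} y"
    unfolding y_def I_def
    by (intro continuous_intros \<phi> indefinite_integral_continuous_1 integrable_continuous_interval \<psi>_cont)
  have ey_cont: "continuous_on {0..p} (\<lambda>r. exp (- lam * r) * y r)"
    by (intro continuous_intros y_cont)
  have "(D has_real_derivative 0) (at x within {0..p})" if x: "x \<in> {0..p}" for x
  proof -
    have "(D has_real_derivative - lam * exp (- lam * x) * (- \<phi> 0 - I x) - \<psi> x * exp (- lam * x)
        + lam * (exp (- lam * x) * y x)) (at x within {0..p})"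
      unfolding D_def I_def K_def
      by (rule derivative_eq_intros integral_has_real_derivative[OF \<psi>_cont x]
          integral_has_real_derivative[OF ey_cont x] | simp)+
    moreover have "- lam * exp (- lam * x) * (- \<phi> 0 - I x) - \<psi> x * exp (- lam * x)
        + lam * (exp (- lam * x) * y x) = 0"
      using \<psi>[OF x] by (simp add: y_def algebra_simps)
    ultimately show ?thesis by simp
  qed
  then obtain c where "\<forall>x\<in>{0..p}. D x = c"
    using has_field_derivative_zero_constant[OF convex_real_interval(5)] by blast
  moreover have "D 0 = 0" by (simp add: D_def I_def K_def)
  ultimately have "D p = 0" using \<open>0 \<le> p\<close> by force
  moreover have "y = (\<lambda>t. \<phi> t - \<phi> 0 - integral {0..t} \<psi>)" by (simp add: fun_eq_iff y_def I_def)
  ultimately show ?thesis using D_eq[of p] by simp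
qed

lemma continuous_on_atLeast_if_Icc:
  fixes f :: "real \<Rightarrow> 'b::topological_space"
  assumes "\<And>b. continuous_on {a..b} f"
  shows "continuous_on {a..} f"
  unfolding continuous_on_eq_continuous_within
proof
  fix x assume x: "x \<in> {a..}"
  have "at x within {a..} = at x within {a..x + 1}"
    by (rule at_within_nhd[where S="{..<x + 1}"]) auto
  moreover have "continuous (at x within {a..x + 1}) f"
    using assms[of "x + 1"] x by (simp add: continuous_on_eq_continuous_within)
  ultimately show "continuous (at x within {a..}) f" by simp
qed

section \<open>Continuous martingales and optional stopping\<close>

lemma is_martingale_integral_indicator:
  "is_martingale M F Y \<Longrightarrow> 0 \<le> s \<Longrightarrow> s \<le> t \<Longrightarrow> A \<in> sets (F s) \<Longrightarrow>
    (\<integral>\<omega>. indicator A \<omega> * Y t \<omega> \<partial>M) = (\<integral>\<omega>. indicator A \<omega> * Y s \<omega> \<partial>M)"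
  unfolding is_martingale_def by blast

lemma sum_indicator_level_sets:
  fixes f :: "'b \<Rightarrow> real"
  assumes "finite S" "\<sigma> \<omega> \<in> S" "\<omega> \<in> \<Omega>"
  shows "(\<Sum>s\<in>S. indicator {\<omega> \<in> \<Omega>. \<sigma> \<omega> = s} \<omega> * f s) = f (\<sigma> \<omega>)"
proof -
  have "(\<Sum>s\<in>S. indicator {\<omega> \<in> \<Omega>. \<sigma> \<omega> = s} \<omega> * f s) = (\<Sum>s\<in>S. if \<sigma> \<omega> = s then f s else 0)"
    using assms(3) by (intro sum.cong) auto
  then show ?thesis using assms(1,2) by simp
qed

locale filtered_prob_space = prob_space M + filtration "space M" F
  for M :: "'a measure" and F :: "real \<Rightarrow> 'a measure" +
  assumes sets_F_subset: "sets (F t) \<subseteq> sets M"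
begin

lemma subalgebra_F: "subalgebra M (F t)"
  using space_F sets_F_subset by (simp add: subalgebra_def)

lemma subalgebra_F_mono: "s \<le> t \<Longrightarrow> subalgebra (F t) (F s)"
  using space_F sets_F_mono by (simp add: subalgebra_def)

lemma integrable_bounded:
  fixes f :: "'a \<Rightarrow> real"
  assumes "f \<in> borel_measurable M" "\<And>\<omega>. \<omega> \<in> space M \<Longrightarrow> \<bar>f \<omega>\<bar> \<le> C"
  shows "integrable M f"
  using assms by (intro integrable_const_bound[where B=C] AE_I2) auto

end

locale continuous_martingale = filtered_prob_space M F
  for M :: "'a measure" and F :: "real \<Rightarrow> 'a measure" +
  fixes Y :: "real \<Rightarrow> 'a \<Rightarrow> real"
  assumes martingale: "is_martingale M F Y"
    and continuous_paths: "\<And>\<omega>. \<omega> \<in> space M \<Longrightarrow> continuous_on {0..} (\<lambda>t. Y t \<omega>)"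
    and locally_bounded: "\<exists>C. \<forall>r\<in>{0..t}. \<forall>\<omega>\<in>space M. \<bar>Y r \<omega>\<bar> \<le> C"
begin

lemma borel_measurable_F:
  assumes "0 \<le> r" "r \<le> t"
  shows "Y r \<in> borel_measurable (F t)"
  using measurable_from_subalg[OF subalgebra_F_mono[OF assms(2)]] martingale assms(1)
  unfolding is_martingale_def by blast

lemma borel_measurable_M: "0 \<le> r \<Longrightarrow> Y r \<in> borel_measurable M"
  by (rule measurable_from_subalg[OF subalgebra_F borel_measurable_F[OF _ order_refl]])

lemma continuous_on_path: "\<omega> \<in> space M \<Longrightarrow> 0 \<le> a \<Longrightarrow> continuous_on {a..b} (\<lambda>t. Y t \<omega>)"
  by (rule continuous_on_subset[OF continuous_paths]) auto

lemma integrable_indicator: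
  "A \<in> sets M \<Longrightarrow> 0 \<le> t \<Longrightarrow> integrable M (\<lambda>\<omega>. indicator A \<omega> * Y t \<omega>)"
  using martingale integrable_real_mult_indicator[of A M "Y t"]
  by (simp add: is_martingale_def mult.commute)

lemma integral_indicator_discount_increment:
  assumes "0 \<le> lam" and st: "0 \<le> s" "s \<le> t" and A: "A \<in> sets (F s)"
  shows "lam * (\<integral>\<omega>. indicator A \<omega> * integral {s..t} (\<lambda>r. exp (- lam * r) * Y r \<omega>) \<partial>M)
    = (exp (- lam * s) - exp (- lam * t)) * (\<integral>\<omega>. indicator A \<omega> * Y s \<omega> \<partial>M)"
proof -
  obtain C where C: "\<And>r \<omega>. r \<in> {0..t} \<Longrightarrow> \<omega> \<in> space M \<Longrightarrow> \<bar>Y r \<omega>\<bar> \<le> C"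
    using locally_bounded by blast
  have AM: "A \<in> sets M" using A sets_F_subset by blast
  have "(\<integral>\<omega>. indicator A \<omega> * integral {s..t} (\<lambda>r. exp (- lam * r) * Y r \<omega>) \<partial>M)
      = (\<integral>\<omega>. integral {s..t} (\<lambda>r. indicator A \<omega> * (exp (- lam * r) * Y r \<omega>)) \<partial>M)"
    by simp
  also have "\<dots> = integral {s..t} (\<lambda>r. \<integral>\<omega>. indicator A \<omega> * (exp (- lam * r) * Y r \<omega>) \<partial>M)"
  proof (rule integral_integral_Icc_swap[OF st(2) _ _ finite_measure_axioms])
    show "(\<lambda>\<omega>. indicator A \<omega> * (exp (- lam * r) * Y r \<omega>)) \<in> borel_measurable M" if "r \<in> {s..t}" for r
    proof -
      have "Y r \<in> borel_measurable M" using that st by (intro borel_measurable_M) simp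
      then show ?thesis using AM by measurable
    qed
    show "continuous_on {s..t} (\<lambda>r. indicator A \<omega> * (exp (- lam * r) * Y r \<omega>))" if "\<omega> \<in> space M" for \<omega>
      using that st by (intro continuous_intros continuous_on_path)
    show "\<bar>indicator A \<omega> * (exp (- lam * r) * Y r \<omega>)\<bar> \<le> C" if "r \<in> {s..t}" "\<omega> \<in> space M" for r \<omega>
    proof -
      have "\<bar>indicator A \<omega> * (exp (- lam * r) * Y r \<omega>)\<bar> \<le> 1 * (1 * \<bar>Y r \<omega>\<bar>)"
        unfolding abs_mult using that st \<open>0 \<le> lam\<close>
        by (intro mult_mono) (auto simp: indicator_def)
      then show ?thesis using C[of r \<omega>] that st by simp
    qed
  qed
  also have "\<dots> = integral {s..t} (\<lambda>r. exp (- lam * r)) * (\<integral>\<omega>. indicator A \<omega> * Y s \<omega> \<partial>M)"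
  proof (subst integral_mult_left[symmetric], rule integral_cong)
    fix r assume "r \<in> {s..t}"
    then have "(\<integral>\<omega>. indicator A \<omega> * Y r \<omega> \<partial>M) = (\<integral>\<omega>. indicator A \<omega> * Y s \<omega> \<partial>M)"
      using st A by (intro is_martingale_integral_indicator[OF martingale]) auto
    then show "(\<integral>\<omega>. indicator A \<omega> * (exp (- lam * r) * Y r \<omega>) \<partial>M)
        = exp (- lam * r) * (\<integral>\<omega>. indicator A \<omega> * Y s \<omega> \<partial>M)"
      by (simp add: mult.left_commute[of "indicator A _"])
  qed
  finally show ?thesis
    using integral_exp_neg[OF st(2), of lam] by (simp only: mult.assoc[symmetric])
qed

lemma integrable_indicator_discount_integral:
  assumes "0 \<le> lam" "0 \<le> a" "a \<le> b" "A \<in> sets M"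
  shows "integrable M (\<lambda>\<omega>. indicator A \<omega> * integral {a..b} (\<lambda>r. exp (- lam * r) * Y r \<omega>))"
proof -
  obtain C where C: "\<And>r \<omega>. r \<in> {0..b} \<Longrightarrow> \<omega> \<in> space M \<Longrightarrow> \<bar>Y r \<omega>\<bar> \<le> C"
    using locally_bounded by blast
  have "(\<lambda>\<omega>. integral {a..b} (\<lambda>r. exp (- lam * r) * Y r \<omega>)) \<in> borel_measurable M"
    using assms by (intro borel_measurable_integral_Icc borel_measurable_times borel_measurable_const
        borel_measurable_M continuous_intros continuous_on_path) auto
  moreover have "\<bar>integral {a..b} (\<lambda>r. exp (- lam * r) * Y r \<omega>)\<bar> \<le> C * (b - a)"
    if \<omega>: "\<omega> \<in> space M" for \<omega>
  proof -
    have "\<bar>exp (- lam * r) * Y r \<omega>\<bar> \<le> C" if "r \<in> {a..b}" for r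
    proof -
      have "\<bar>exp (- lam * r) * Y r \<omega>\<bar> \<le> 1 * \<bar>Y r \<omega>\<bar>"
        unfolding abs_mult using assms that by (intro mult_right_mono) auto
      then show ?thesis using C[OF _ \<omega>, of r] assms that by simp
    qed
    then have "norm (integral {a..b} (\<lambda>r. exp (- lam * r) * Y r \<omega>)) \<le> C * (b - a)"
      using assms \<omega> by (intro integral_bound continuous_intros continuous_on_path) auto
    then show ?thesis by simp
  qed
  ultimately show ?thesis
    using assms(4) by (intro integrable_bounded[where C="\<bar>C * (b - a)\<bar>"])
      (auto simp: indicator_def intro: order_trans[OF _ abs_ge_self])
qed

lemma integral_indicator_discount:
  assumes "0 \<le> lam" and st: "0 \<le> s" "s \<le> t" and A: "A \<in> sets (F s)"
  shows "(\<integral>\<omega>. indicator A \<omega> * discount lam (\<lambda>r. Y r \<omega>) t \<partial>M)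
    = (\<integral>\<omega>. indicator A \<omega> * discount lam (\<lambda>r. Y r \<omega>) s \<partial>M)"
proof -
  define K where "K a b \<omega> = indicator A \<omega> * integral {a..b} (\<lambda>r. exp (- lam * r) * Y r \<omega>)" for a b \<omega>
  have AM: "A \<in> sets M" using A sets_F_subset by blast
  have K_int: "integrable M (K a b)" if "0 \<le> a" "a \<le> b" for a b
    unfolding K_def using integrable_indicator_discount_integral[OF assms(1) that AM] .
  have expand: "(\<integral>\<omega>. indicator A \<omega> * discount lam (\<lambda>r. Y r \<omega>) u \<partial>M)
      = exp (- lam * u) * (\<integral>\<omega>. indicator A \<omega> * Y u \<omega> \<partial>M) + lam * (\<integral>\<omega>. K 0 u \<omega> \<partial>M)"
    if "0 \<le> u" for u
  proof -
    have "(\<integral>\<omega>. indicator A \<omega> * discount lam (\<lambda>r. Y r \<omega>) u \<partial>M)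
        = (\<integral>\<omega>. exp (- lam * u) * (indicator A \<omega> * Y u \<omega>) + lam * K 0 u \<omega> \<partial>M)"
      by (simp add: discount_def K_def algebra_simps)
    also have "\<dots> = exp (- lam * u) * (\<integral>\<omega>. indicator A \<omega> * Y u \<omega> \<partial>M) + lam * (\<integral>\<omega>. K 0 u \<omega> \<partial>M)"
      using AM that K_int[OF order_refl that] by (simp add: integrable_indicator)
    finally show ?thesis .
  qed
  have "(\<integral>\<omega>. K 0 t \<omega> \<partial>M) = (\<integral>\<omega>. K 0 s \<omega> + K s t \<omega> \<partial>M)"
  proof (rule Bochner_Integration.integral_cong)
    fix \<omega> assume "\<omega> \<in> space M"
    then have "integral {0..s} (\<lambda>r. exp (- lam * r) * Y r \<omega>) + integral {s..t} (\<lambda>r. exp (- lam * r) * Y r \<omega>)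
        = integral {0..t} (\<lambda>r. exp (- lam * r) * Y r \<omega>)"
      using st by (intro Henstock_Kurzweil_Integration.integral_combine integrable_continuous_interval
          continuous_intros continuous_on_path) auto
    then show "K 0 t \<omega> = K 0 s \<omega> + K s t \<omega>" by (simp only: K_def distrib_left[symmetric])
  qed simp
  also have "\<dots> = (\<integral>\<omega>. K 0 s \<omega> \<partial>M) + (\<integral>\<omega>. K s t \<omega> \<partial>M)"
    using st by (intro Bochner_Integration.integral_add K_int) auto
  finally have "(\<integral>\<omega>. K 0 t \<omega> \<partial>M) = (\<integral>\<omega>. K 0 s \<omega> \<partial>M) + (\<integral>\<omega>. K s t \<omega> \<partial>M)" .
  then show ?thesis
    using expand[of t] expand[of s] st is_martingale_integral_indicator[OF martingale st A]
      integral_indicator_discount_increment[OF assms]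
    by (simp add: K_def algebra_simps)
qed

lemma locally_bounded_discount:
  assumes "0 \<le> lam"
  shows "\<exists>C. \<forall>r\<in>{0..t}. \<forall>\<omega>\<in>space M. \<bar>discount lam (\<lambda>r. Y r \<omega>) r\<bar> \<le> C"
proof -
  obtain C where C: "\<And>r \<omega>. r \<in> {0..t} \<Longrightarrow> \<omega> \<in> space M \<Longrightarrow> \<bar>Y r \<omega>\<bar> \<le> C"
    using locally_bounded by blast
  have "\<bar>discount lam (\<lambda>r. Y r \<omega>) r\<bar> \<le> (1 + lam * t) * \<bar>C\<bar>" if "r \<in> {0..t}" "\<omega> \<in> space M" for r \<omega>
  proof -
    have "\<bar>discount lam (\<lambda>r. Y r \<omega>) r\<bar> \<le> (1 + lam * r) * \<bar>C\<bar>"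
      using that C[of _ \<omega>] assms by (intro abs_discount_le continuous_on_path) force+
    also have "\<dots> \<le> (1 + lam * t) * \<bar>C\<bar>"
      using that assms by (intro mult_right_mono add_left_mono mult_left_mono) auto
    finally show ?thesis .
  qed
  then show ?thesis by blast
qed

lemma borel_measurable_discount_F:
  assumes "0 \<le> t"
  shows "(\<lambda>\<omega>. discount lam (\<lambda>r. Y r \<omega>) t) \<in> borel_measurable (F t)"
proof -
  have "(\<lambda>\<omega>. integral {0..t} (\<lambda>r. exp (- lam * r) * Y r \<omega>)) \<in> borel_measurable (F t)"
    using assms space_F by (intro borel_measurable_integral_Icc borel_measurable_times
        borel_measurable_const borel_measurable_F continuous_intros continuous_on_path) auto
  moreover have "Y t \<in> borel_measurable (F t)" using assms by (rule borel_measurable_F) simp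
  ultimately show ?thesis unfolding discount_def by measurable
qed

lemma continuous_martingale_discount:
  assumes "0 \<le> lam"
  shows "continuous_martingale M F (\<lambda>t \<omega>. discount lam (\<lambda>r. Y r \<omega>) t)"
proof unfold_locales
  show "continuous_on {0..} (\<lambda>t. discount lam (\<lambda>r. Y r \<omega>) t)" if "\<omega> \<in> space M" for \<omega>
    using that by (intro continuous_on_atLeast_if_Icc continuous_on_discount continuous_on_path) auto
  show "\<exists>C. \<forall>r\<in>{0..t}. \<forall>\<omega>\<in>space M. \<bar>discount lam (\<lambda>r. Y r \<omega>) r\<bar> \<le> C" for t
    by (rule locally_bounded_discount[OF assms])
  have "integrable M (\<lambda>\<omega>. discount lam (\<lambda>r. Y r \<omega>) t)" if "0 \<le> t" for t
  proof -
    obtain C where "\<forall>r\<in>{0..t}. \<forall>\<omega>\<in>space M. \<bar>discount lam (\<lambda>r. Y r \<omega>) r\<bar> \<le> C"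
      using locally_bounded_discount[OF assms] by blast
    with that show ?thesis
      by (intro integrable_bounded measurable_from_subalg[OF subalgebra_F borel_measurable_discount_F]) auto
  qed
  then show "is_martingale M F (\<lambda>t \<omega>. discount lam (\<lambda>r. Y r \<omega>) t)"
    unfolding is_martingale_def using borel_measurable_discount_F integral_indicator_discount[OF assms]
    by blast
qed

end

lemma exists_zero_iff_small_on_rationals:
  fixes f :: "real \<Rightarrow> real"
  assumes f: "continuous_on {0..c} f" and "0 \<le> c"
  shows "(\<exists>s\<in>{0..c}. f s = 0) \<longleftrightarrow> (\<forall>m::nat. \<exists>q\<in>{0..c} \<inter> \<rat> \<union> {c}. \<bar>f q\<bar> < inverse (Suc m))"
proof
  assume "\<exists>s\<in>{0..c}. f s = 0"
  then obtain s where s: "s \<in> {0..c}" "f s = 0" by blast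
  show "\<forall>m::nat. \<exists>q\<in>{0..c} \<inter> \<rat> \<union> {c}. \<bar>f q\<bar> < inverse (Suc m)"
  proof
    fix m :: nat
    obtain d where "0 < d" and d: "\<And>q. q \<in> {0..c} \<Longrightarrow> dist q s < d \<Longrightarrow> \<bar>f q\<bar> < inverse (Suc m)"
      using f s unfolding continuous_on_iff by (metis dist_real_def diff_zero of_nat_Suc inverse_positive_iff_positive
          of_nat_0_less_iff zero_less_Suc)
    show "\<exists>q\<in>{0..c} \<inter> \<rat> \<union> {c}. \<bar>f q\<bar> < inverse (Suc m)"
    proof (cases "s = c")
      case True
      then show ?thesis using d[of c] s \<open>0 < d\<close> by auto
    next
      case False
      then have "s < min c (s + d)" using s \<open>0 < d\<close> by auto
      then obtain q where "q \<in> \<rat>" "s < q" "q < min c (s + d)" using Rats_dense_in_real by blast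
      then show ?thesis using d[of q] s by (intro bexI[of _ q]) (auto simp: dist_real_def)
    qed
  qed
next
  assume small: "\<forall>m::nat. \<exists>q\<in>{0..c} \<inter> \<rat> \<union> {c}. \<bar>f q\<bar> < inverse (Suc m)"
  show "\<exists>s\<in>{0..c}. f s = 0"
  proof (rule ccontr)
    assume no_zero: "\<not> (\<exists>s\<in>{0..c}. f s = 0)"
    obtain s where s: "s \<in> {0..c}" and min: "\<And>y. y \<in> {0..c} \<Longrightarrow> \<bar>f s\<bar> \<le> \<bar>f y\<bar>"
      using continuous_attains_inf[OF compact_Icc _ continuous_on_rabs[OF f]] \<open>0 \<le> c\<close> by auto
    have "0 < \<bar>f s\<bar>" using no_zero s by auto
    then obtain m :: nat where "inverse (Suc m) < \<bar>f s\<bar>" using reals_Archimedean by blast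
    moreover obtain q where "q \<in> {0..c} \<inter> \<rat> \<union> {c}" "\<bar>f q\<bar> < inverse (Suc m)" using small by blast
    ultimately show False using min[of q] \<open>0 \<le> c\<close> by auto
  qed
qed

context filtered_prob_space
begin

lemma pred_exists_zero:
  fixes D :: "real \<Rightarrow> 'a \<Rightarrow> real"
  assumes adapted: "\<And>q. 0 \<le> q \<Longrightarrow> D q \<in> borel_measurable (F q)"
    and cont: "\<And>\<omega>. \<omega> \<in> space M \<Longrightarrow> continuous_on {0..} (\<lambda>s. D s \<omega>)"
    and "0 \<le> c"
  shows "Measurable.pred (F c) (\<lambda>\<omega>. \<exists>s\<in>{0..c}. D s \<omega> = 0)"
proof -
  let ?Q = "{0..c} \<inter> \<rat> \<union> {c}"
  have "countable ?Q" using countable_rat by (auto intro: countable_subset)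
  have [measurable]: "D q \<in> borel_measurable (F c)" if "q \<in> ?Q" for q
    using that \<open>0 \<le> c\<close> by (intro measurable_from_subalg[OF subalgebra_F_mono adapted]) auto
  have "Measurable.pred (F c) (\<lambda>\<omega>. \<forall>m::nat. \<exists>q\<in>?Q. \<bar>D q \<omega>\<bar> < inverse (Suc m))"
    using \<open>countable ?Q\<close> by measurable
  moreover have "{\<omega> \<in> space (F c). \<exists>s\<in>{0..c}. D s \<omega> = 0}
      = {\<omega> \<in> space (F c). \<forall>m::nat. \<exists>q\<in>?Q. \<bar>D q \<omega>\<bar> < inverse (Suc m)}"
  proof (rule Collect_cong)
    fix \<omega> show "\<omega> \<in> space (F c) \<and> (\<exists>s\<in>{0..c}. D s \<omega> = 0)
        \<longleftrightarrow> \<omega> \<in> space (F c) \<and> (\<forall>m::nat. \<exists>q\<in>?Q. \<bar>D q \<omega>\<bar> < inverse (Suc m))"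
    proof (cases "\<omega> \<in> space M")
      case True
      have "{0..c} \<subseteq> {0..}" by auto
      note iff = exists_zero_iff_small_on_rationals[OF continuous_on_subset[OF cont[OF True] this] \<open>0 \<le> c\<close>]
      show ?thesis by (simp only: iff)
    qed (simp add: space_F)
  qed
  ultimately show ?thesis unfolding pred_def by simp
qed

lemma level_set_grid_ceiling:
  assumes "stopping_time F \<rho>" "0 < h"
  shows "{\<omega> \<in> space M. grid_ceiling h (\<rho> \<omega>) = h * of_int j} \<in> sets (F (h * of_int j))"
proof -
  let ?s = "h * of_int j"
  have "{\<omega> \<in> space M. grid_ceiling h (\<rho> \<omega>) = ?s} = {\<omega> \<in> space (F ?s). \<rho> \<omega> \<le> ?s \<and> \<not> \<rho> \<omega> \<le> ?s - h}"
    unfolding grid_ceiling_eq_iff[OF assms(2)] by (auto simp: space_F)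
  also have "\<dots> \<in> sets (F ?s)"
    using stopping_timeD[OF assms(1), of ?s] stopping_time_le_const[OF assms(1), of "?s - h" ?s] assms(2)
    by (intro predE pred_intros_logic) auto
  finally show ?thesis .
qed

lemma optional_stopping_finite:
  fixes Z :: "real \<Rightarrow> 'a \<Rightarrow> real"
  assumes Z: "is_martingale M F Z" and S: "finite S" "S \<subseteq> {0..T}"
    and \<sigma>: "\<And>\<omega>. \<omega> \<in> space M \<Longrightarrow> \<sigma> \<omega> \<in> S"
      "\<And>s. s \<in> S \<Longrightarrow> {\<omega> \<in> space M. \<sigma> \<omega> = s} \<in> sets (F s)"
  shows "(\<lambda>\<omega>. Z (\<sigma> \<omega>) \<omega>) \<in> borel_measurable M" "(\<integral>\<omega>. Z (\<sigma> \<omega>) \<omega> \<partial>M) = (\<integral>\<omega>. Z 0 \<omega> \<partial>M)"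
proof -
  define E where "E s = {\<omega> \<in> space M. \<sigma> \<omega> = s}" for s
  have E: "E s \<in> sets M" if "s \<in> S" for s
    using \<sigma>(2)[OF that] sets_F_subset unfolding E_def by blast
  have Z_int: "integrable M (Z t)" "Z t \<in> borel_measurable M" if "0 \<le> t" for t
    using Z that subalgebra_F by (auto simp: is_martingale_def intro: measurable_from_subalg)
  have "0 \<le> T" using \<sigma>(1) S(2) not_empty by fastforce
  have select: "(\<Sum>s\<in>S. indicator (E s) \<omega> * f s) = f (\<sigma> \<omega>)" if "\<omega> \<in> space M" for \<omega> and f :: "real \<Rightarrow> real"
    unfolding E_def using S(1) \<sigma>(1)[OF that] that by (rule sum_indicator_level_sets)
  have int: "integrable M (\<lambda>\<omega>. indicator (E s) \<omega> * Z t \<omega>)" if "s \<in> S" "0 \<le> t" for s t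
    using Z_int[OF that(2)] E[OF that(1)] integrable_real_mult_indicator by (simp add: mult.commute)
  have "(\<lambda>\<omega>. \<Sum>s\<in>S. indicator (E s) \<omega> * Z s \<omega>) \<in> borel_measurable M"
    using E Z_int S(2) by (intro borel_measurable_sum borel_measurable_times borel_measurable_indicator) auto
  then show "(\<lambda>\<omega>. Z (\<sigma> \<omega>) \<omega>) \<in> borel_measurable M"
    by (rule measurable_cong[THEN iffD1, rotated]) (rule select)
  have "(\<integral>\<omega>. Z (\<sigma> \<omega>) \<omega> \<partial>M) = (\<integral>\<omega>. (\<Sum>s\<in>S. indicator (E s) \<omega> * Z s \<omega>) \<partial>M)"
    by (intro Bochner_Integration.integral_cong) (simp_all add: select)
  also have "\<dots> = (\<Sum>s\<in>S. \<integral>\<omega>. indicator (E s) \<omega> * Z s \<omega> \<partial>M)"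
    using S(2) by (intro Bochner_Integration.integral_sum int) auto
  also have "\<dots> = (\<Sum>s\<in>S. \<integral>\<omega>. indicator (E s) \<omega> * Z T \<omega> \<partial>M)"
  proof (intro sum.cong refl)
    fix s assume "s \<in> S"
    then show "(\<integral>\<omega>. indicator (E s) \<omega> * Z s \<omega> \<partial>M) = (\<integral>\<omega>. indicator (E s) \<omega> * Z T \<omega> \<partial>M)"
      using S(2) \<sigma>(2) unfolding E_def by (intro is_martingale_integral_indicator[OF Z, symmetric]) auto
  qed
  also have "\<dots> = (\<integral>\<omega>. (\<Sum>s\<in>S. indicator (E s) \<omega> * Z T \<omega>) \<partial>M)"
    using \<open>0 \<le> T\<close> by (intro Bochner_Integration.integral_sum[symmetric] int) auto
  also have "\<dots> = (\<integral>\<omega>. indicator (space M) \<omega> * Z T \<omega> \<partial>M)"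
    by (intro Bochner_Integration.integral_cong) (simp_all add: select)
  also have "\<dots> = (\<integral>\<omega>. indicator (space M) \<omega> * Z 0 \<omega> \<partial>M)"
    using \<open>0 \<le> T\<close> space_F[of 0] sets.top[of "F 0"] by (intro is_martingale_integral_indicator[OF Z]) auto
  finally show "(\<integral>\<omega>. Z (\<sigma> \<omega>) \<omega> \<partial>M) = (\<integral>\<omega>. Z 0 \<omega> \<partial>M)"
    by (simp cong: Bochner_Integration.integral_cong)
qed

end

context continuous_martingale
begin

lemma optional_stopping:
  assumes "0 < T" and \<rho>: "stopping_time F \<rho>" "\<And>\<omega>. \<omega> \<in> space M \<Longrightarrow> \<rho> \<omega> \<in> {0..T}"
  shows "(\<lambda>\<omega>. Y (\<rho> \<omega>) \<omega>) \<in> borel_measurable M" "(\<integral>\<omega>. Y (\<rho> \<omega>) \<omega> \<partial>M) = (\<integral>\<omega>. Y 0 \<omega> \<partial>M)"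
proof -
  define \<sigma> where "\<sigma> n \<omega> = grid_ceiling (T / real (Suc n)) (\<rho> \<omega>)" for n \<omega>
  have \<sigma>_grid: "\<sigma> n \<omega> \<in> uniform_grid T n" if "\<omega> \<in> space M" for n \<omega>
    unfolding \<sigma>_def using assms(1) \<rho>(2)[OF that] by (rule grid_ceiling_in_uniform_grid)
  have grid: "uniform_grid T n \<subseteq> {0..T}" for n using assms(1) by (intro uniform_grid_subset) simp
  have "{\<omega> \<in> space M. \<sigma> n \<omega> = s} \<in> sets (F s)" if s_grid: "s \<in> uniform_grid T n" for n s
  proof -
    obtain j where s: "s = T / real (Suc n) * of_int (int j)" using s_grid by (auto simp: uniform_grid_def)
    have "0 < T / real (Suc n)" using assms(1) by simp
    then show ?thesis unfolding s \<sigma>_def by (rule level_set_grid_ceiling[OF \<rho>(1)])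
  qed
  note stopped = optional_stopping_finite[OF martingale finite_uniform_grid grid \<sigma>_grid this]
  have conv: "(\<lambda>n. Y (\<sigma> n \<omega>) \<omega>) \<longlonglongrightarrow> Y (\<rho> \<omega>) \<omega>" if "\<omega> \<in> space M" for \<omega>
  proof (rule continuous_on_tendsto_compose[OF continuous_on_path[OF that order_refl, of T]])
    show "(\<lambda>n. \<sigma> n \<omega>) \<longlonglongrightarrow> \<rho> \<omega>"
      unfolding \<sigma>_def by (rule grid_ceiling_tendsto[OF \<open>0 < T\<close>])
    show "\<rho> \<omega> \<in> {0..T}" by (rule \<rho>(2)[OF that])
    show "\<forall>\<^sub>F n in sequentially. \<sigma> n \<omega> \<in> {0..T}"
      using \<sigma>_grid[OF that] grid by (intro always_eventually allI) blast
  qed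
  show meas: "(\<lambda>\<omega>. Y (\<rho> \<omega>) \<omega>) \<in> borel_measurable M"
    using conv stopped(1) by (rule borel_measurable_LIMSEQ_real)
  obtain C where C: "\<And>r \<omega>. r \<in> {0..T} \<Longrightarrow> \<omega> \<in> space M \<Longrightarrow> \<bar>Y r \<omega>\<bar> \<le> C"
    using locally_bounded by blast
  have "(\<lambda>n. \<integral>\<omega>. Y (\<sigma> n \<omega>) \<omega> \<partial>M) \<longlonglongrightarrow> (\<integral>\<omega>. Y (\<rho> \<omega>) \<omega> \<partial>M)"
  proof (rule integral_dominated_convergence[where w="\<lambda>_. C"])
    show "AE \<omega> in M. norm (Y (\<sigma> n \<omega>) \<omega>) \<le> C" for n
    proof (rule AE_I2)
      fix \<omega> assume "\<omega> \<in> space M"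
      then have "\<sigma> n \<omega> \<in> {0..T}" using \<sigma>_grid grid by blast
      then show "norm (Y (\<sigma> n \<omega>) \<omega>) \<le> C" using C \<open>\<omega> \<in> space M\<close> by simp
    qed
    show "AE \<omega> in M. (\<lambda>n. Y (\<sigma> n \<omega>) \<omega>) \<longlonglongrightarrow> Y (\<rho> \<omega>) \<omega>"
      using conv by (rule AE_I2)
  qed (simp_all add: meas stopped(1))
  then show "(\<integral>\<omega>. Y (\<rho> \<omega>) \<omega> \<partial>M) = (\<integral>\<omega>. Y 0 \<omega> \<partial>M)"
    using stopped(2) by (simp add: LIMSEQ_const_iff)
qed

end

section \<open>Hitting the far ends of the legs\<close>

locale spider_hitting =
  fixes N :: nat and M :: "'a measure" and F :: "real \<Rightarrow> 'a measure"
    and X :: "real \<Rightarrow> 'a \<Rightarrow> nat \<times> real" and L :: "nat \<Rightarrow> real" and lam :: real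
  assumes N: "2 \<le> N" and BM: "spider_BM N M F X" and L_pos: "\<forall>i<N. 0 < L i" and lam: "0 < lam"
begin

sublocale filtered_prob_space M F
  using BM by (intro filtered_prob_space.intro filtered_prob_space_axioms.intro) (auto simp: spider_BM_def)

lemma X_point: "\<omega> \<in> space M \<Longrightarrow> 0 \<le> t \<Longrightarrow> sp_point N (X t \<omega>)"
  using BM by (simp add: spider_BM_def)

lemma X_0: "\<omega> \<in> space M \<Longrightarrow> snd (X 0 \<omega>) = 0"
  using BM by (simp add: spider_BM_def)

lemma X_continuous: "\<omega> \<in> space M \<Longrightarrow> sp_continuous_path (\<lambda>t. X t \<omega>)"
  using BM by (simp add: spider_BM_def)

lemma X_adapted: "0 \<le> t \<Longrightarrow> X t \<in> F t \<rightarrow>\<^sub>M count_space UNIV \<Otimes>\<^sub>M borel"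
  using BM by (simp add: spider_BM_def)

definition "k = sqrt (2 * lam)"

lemma k_pos: "0 < k" and k_sq: "k\<^sup>2 = 2 * lam"
  using lam by (simp_all add: k_def)

definition "u i = extend_C2 (laplace_leg N L k i) (laplace_leg' N L k i) (\<lambda>x. k\<^sup>2 * laplace_leg N L k i x) (L i)"
definition "u' i = extend_C2' (laplace_leg' N L k i) (\<lambda>x. k\<^sup>2 * laplace_leg N L k i x) (L i)"
definition "u'' i = extend_C2'' (laplace_leg' N L k i) (\<lambda>x. k\<^sup>2 * laplace_leg N L k i x) (L i)"

lemma sp_gen_domain_u: "sp_gen_domain N u u' u''"
  unfolding u_def[abs_def] u'_def[abs_def] u''_def[abs_def]
proof (rule sp_gen_domain_extend_C2)
  show "continuous_on UNIV (\<lambda>x. k\<^sup>2 * laplace_leg N L k i x)" for i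
    by (intro continuous_intros continuous_at_imp_continuous_on ballI DERIV_isCont[OF has_real_derivative_laplace_leg])
  show "(\<Sum>i<N. laplace_leg' N L k i 0) = 0"
    using N L_pos k_pos by (intro laplace_kirchhoff) auto
qed (use L_pos in \<open>auto simp: laplace_leg_origin intro: has_real_derivative_laplace_leg has_real_derivative_laplace_leg'\<close>)

lemma u_glue: "\<forall>i<N. u i 0 = u 0 0" and u''_glue: "\<forall>i<N. u'' i 0 = u'' 0 0"
  using sp_gen_domain_u unfolding sp_gen_domain_def by blast+

lemma u_eq: "0 \<le> x \<Longrightarrow> x \<le> L i \<Longrightarrow> u i x = laplace_leg N L k i x"
  and u''_eq: "0 \<le> x \<Longrightarrow> x \<le> L i \<Longrightarrow> u'' i x = 2 * lam * u i x"
  by (simp_all add: u_def u''_def extend_C2_def extend_C2''_def k_sq)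

lemma continuous_u: "continuous_on UNIV (u i)"
  unfolding u_def
  by (intro continuous_at_imp_continuous_on ballI DERIV_isCont[OF has_real_derivative_extend_C2]
      has_real_derivative_laplace_leg)

lemma continuous_u'': "continuous_on UNIV (u'' i)"
  unfolding u''_def
  by (intro continuous_on_extend_C2'' continuous_intros continuous_at_imp_continuous_on ballI
      DERIV_isCont[OF has_real_derivative_laplace_leg])

definition "Phi t \<omega> = u (fst (X t \<omega>)) (snd (X t \<omega>))"
definition "Psi t \<omega> = u'' (fst (X t \<omega>)) (snd (X t \<omega>)) / 2"
definition "Y t \<omega> = Phi t \<omega> - Phi 0 \<omega> - integral {0..t} (\<lambda>r. Psi r \<omega>)"

lemma is_martingale_Y: "is_martingale M F Y"
  using BM sp_gen_domain_u unfolding spider_BM_def Y_def[abs_def] Phi_def Psi_def by blast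

lemma bounded_Phi_Psi:
  "\<exists>B. \<forall>\<omega>\<in>space M. \<forall>t\<ge>0. \<bar>Phi t \<omega>\<bar> \<le> B" "\<exists>B. \<forall>\<omega>\<in>space M. \<forall>t\<ge>0. \<bar>Psi t \<omega>\<bar> \<le> B"
proof -
  obtain B where B: "\<forall>i<N. \<forall>x\<ge>0. \<bar>u i x\<bar> \<le> B \<and> \<bar>u'' i x\<bar> \<le> B"
    using sp_gen_domain_u unfolding sp_gen_domain_def by blast
  have "\<bar>Phi t \<omega>\<bar> \<le> B" "\<bar>Psi t \<omega>\<bar> \<le> \<bar>B\<bar>" if "\<omega> \<in> space M" "0 \<le> t" for \<omega> t
    using B X_point[OF that] unfolding sp_point_def Phi_def Psi_def by fastforce+
  then show "\<exists>B. \<forall>\<omega>\<in>space M. \<forall>t\<ge>0. \<bar>Phi t \<omega>\<bar> \<le> B" "\<exists>B. \<forall>\<omega>\<in>space M. \<forall>t\<ge>0. \<bar>Psi t \<omega>\<bar> \<le> B"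
    by blast+
qed

lemma continuous_Phi: "\<omega> \<in> space M \<Longrightarrow> continuous_on {0..} (\<lambda>t. Phi t \<omega>)"
  unfolding Phi_def
  by (rule continuous_on_spider_fun[where N=N, OF X_continuous X_point u_glue(1)
        continuous_on_subset[OF continuous_u]]) auto

lemma continuous_Psi: "\<omega> \<in> space M \<Longrightarrow> continuous_on {0..} (\<lambda>t. Psi t \<omega>)"
proof -
  assume \<omega>: "\<omega> \<in> space M"
  have "continuous_on {0..} (\<lambda>x. u'' i x / 2)" for i
    by (intro continuous_intros continuous_on_subset[OF continuous_u'']) auto
  moreover have "\<forall>i<N. u'' i 0 / 2 = u'' 0 0 / 2" using u''_glue by metis
  ultimately have "continuous_on {0..} (\<lambda>t. (\<lambda>i x. u'' i x / 2) (fst (X t \<omega>)) (snd (X t \<omega>)))"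
    by (intro continuous_on_spider_fun[where N=N, OF X_continuous[OF \<omega>] X_point[OF \<omega>]])
  then show ?thesis by (simp add: Psi_def)
qed

lemma continuous_martingale_Y: "continuous_martingale M F Y"
proof unfold_locales
  show "is_martingale M F Y" by (rule is_martingale_Y)
  show "continuous_on {0..} (\<lambda>t. Y t \<omega>)" if "\<omega> \<in> space M" for \<omega>
    unfolding Y_def
    by (intro continuous_intros continuous_Phi[OF that] continuous_on_atLeast_if_Icc
        indefinite_integral_continuous_1 integrable_continuous_interval
        continuous_on_subset[OF continuous_Psi[OF that]]) auto
  obtain B where B: "\<forall>\<omega>\<in>space M. \<forall>t\<ge>0. \<bar>Phi t \<omega>\<bar> \<le> B" using bounded_Phi_Psi(1) ..
  obtain B' where B': "\<forall>\<omega>\<in>space M. \<forall>t\<ge>0. \<bar>Psi t \<omega>\<bar> \<le> B'" using bounded_Phi_Psi(2) ..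
  fix t :: real
  have "\<bar>Y r \<omega>\<bar> \<le> 2 * B + B' * t" if "r \<in> {0..t}" "\<omega> \<in> space M" for r \<omega>
  proof -
    have "norm (integral {0..r} (\<lambda>r. Psi r \<omega>)) \<le> B' * (r - 0)"
      using that B' by (intro integral_bound continuous_on_subset[OF continuous_Psi]) auto
    then have "\<bar>integral {0..r} (\<lambda>r. Psi r \<omega>)\<bar> \<le> B' * r" by simp
    moreover have "0 \<le> B'" using that B' by force
    then have "B' * r \<le> B' * t" using that by (intro mult_left_mono) auto
    moreover have "\<bar>Phi r \<omega>\<bar> \<le> B" "\<bar>Phi 0 \<omega>\<bar> \<le> B" using B that by auto
    ultimately show ?thesis unfolding Y_def by linarith
  qed
  then show "\<exists>C. \<forall>r\<in>{0..t}. \<forall>\<omega>\<in>space M. \<bar>Y r \<omega>\<bar> \<le> C" by blast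
qed

interpretation Y: continuous_martingale M F Y
  by (rule continuous_martingale_Y)

interpretation Z: continuous_martingale M F "\<lambda>t \<omega>. discount lam (\<lambda>r. Y r \<omega>) t"
  using lam by (intro Y.continuous_martingale_discount) simp

definition "target_gap s \<omega> = (\<Prod>i<N. \<bar>leg_coord i (X s \<omega>) - L i\<bar>)"

lemma leg_coord_eq_L_iff: "i < N \<Longrightarrow> leg_coord i p = L i \<longleftrightarrow> p = (i, L i)"
  using L_pos by (cases p) (auto simp: leg_coord_def)

lemma target_gap_eq_0_iff: "target_gap s \<omega> = 0 \<longleftrightarrow> (\<exists>i<N. X s \<omega> = (i, L i))"
  unfolding target_gap_def using leg_coord_eq_L_iff by (subst prod_zero_iff) auto

lemma hit_set_eq: "hit_set N L X \<omega> = {s \<in> {0..}. target_gap s \<omega> = 0}"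
  by (auto simp: hit_set_def target_gap_eq_0_iff)

lemma continuous_target_gap: "\<omega> \<in> space M \<Longrightarrow> continuous_on {0..} (\<lambda>s. target_gap s \<omega>)"
  unfolding target_gap_def
  by (intro continuous_intros continuous_on_leg_coord[where N=N, OF X_continuous X_point])

lemma target_gap_adapted: "0 \<le> q \<Longrightarrow> (\<lambda>\<omega>. target_gap q \<omega>) \<in> borel_measurable (F q)"
proof -
  assume q: "0 \<le> q"
  have "leg_coord i \<in> borel_measurable (count_space UNIV \<Otimes>\<^sub>M borel)" for i
    unfolding leg_coord_def[abs_def] by measurable
  then have "(\<lambda>\<omega>. leg_coord i (X q \<omega>)) \<in> borel_measurable (F q)" for i
    by (intro measurable_compose[OF X_adapted[OF q]])
  then show ?thesis unfolding target_gap_def by measurable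
qed

lemma hit_time_in_hit_set:
  assumes "\<omega> \<in> space M" "hit_set N L X \<omega> \<noteq> {}"
  shows "hit_time N L X \<omega> \<in> hit_set N L X \<omega>"
proof -
  have "closed (hit_set N L X \<omega>)"
    unfolding hit_set_eq
    by (rule continuous_closed_preimage_constant[OF continuous_target_gap[OF assms(1)] closed_atLeast])
  moreover have "bdd_below (hit_set N L X \<omega>)" by (auto simp: bdd_below_def hit_set_def)
  ultimately show ?thesis unfolding hit_time_def using assms(2) closed_contains_Inf by blast
qed

lemma hit_time_le: "s \<in> hit_set N L X \<omega> \<Longrightarrow> hit_time N L X \<omega> \<le> s"
  unfolding hit_time_def by (rule cInf_lower) (auto simp: bdd_below_def hit_set_def)

definition "stop T \<omega> = (if hit_set N L X \<omega> = {} then T else min T (hit_time N L X \<omega>))"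

lemma stop_range:
  assumes "\<omega> \<in> space M" "0 \<le> T"
  shows "stop T \<omega> \<in> {0..T}"
proof (cases "hit_set N L X \<omega> = {}")
  case False
  then have "0 \<le> hit_time N L X \<omega>"
    using hit_time_in_hit_set[OF assms(1)] unfolding hit_set_def by blast
  then show ?thesis using False assms(2) by (simp add: stop_def)
qed (use assms in \<open>simp add: stop_def\<close>)

lemma stop_le_iff:
  assumes \<omega>: "\<omega> \<in> space M" and "c < T"
  shows "stop T \<omega> \<le> c \<longleftrightarrow> (\<exists>s\<in>{0..c}. target_gap s \<omega> = 0)"
proof
  assume "stop T \<omega> \<le> c"
  then have ne: "hit_set N L X \<omega> \<noteq> {}" and "hit_time N L X \<omega> \<le> c"
    using \<open>c < T\<close> by (auto simp: stop_def split: if_splits)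
  then show "\<exists>s\<in>{0..c}. target_gap s \<omega> = 0"
    using hit_time_in_hit_set[OF \<omega> ne] by (auto simp: hit_set_eq)
next
  assume "\<exists>s\<in>{0..c}. target_gap s \<omega> = 0"
  then obtain s where "s \<in> hit_set N L X \<omega>" "s \<le> c" by (auto simp: hit_set_eq)
  then show "stop T \<omega> \<le> c" using hit_time_le[of s \<omega>] by (auto simp: stop_def)
qed

lemma stopping_time_stop:
  assumes "0 \<le> T"
  shows "stopping_time F (stop T)"
proof
  fix c :: real
  have range: "0 \<le> stop T \<omega>" "stop T \<omega> \<le> T" if "\<omega> \<in> space (F c)" for \<omega>
    using stop_range[OF _ assms, of \<omega>] that space_F by auto
  consider "c < 0" | "T \<le> c" | "0 \<le> c" "c < T" by linarith
  then show "Measurable.pred (F c) (\<lambda>\<omega>. stop T \<omega> \<le> c)"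
  proof cases
    case 1
    then have "(stop T \<omega> \<le> c) = False" if "\<omega> \<in> space (F c)" for \<omega>
      using range[OF that] by simp
    then show ?thesis by (rule measurable_cong[THEN iffD2]) (auto intro: measurable_const)
  next
    case 2
    then have "(stop T \<omega> \<le> c) = True" if "\<omega> \<in> space (F c)" for \<omega>
      using range[OF that] by simp
    then show ?thesis by (rule measurable_cong[THEN iffD2]) (auto intro: measurable_const)
  next
    case 3
    have "(stop T \<omega> \<le> c) = (\<exists>s\<in>{0..c}. target_gap s \<omega> = 0)" if "\<omega> \<in> space (F c)" for \<omega>
      using stop_le_iff[OF _ 3(2)] that space_F by simp
    moreover have "Measurable.pred (F c) (\<lambda>\<omega>. \<exists>s\<in>{0..c}. target_gap s \<omega> = 0)"
      using 3 by (intro pred_exists_zero target_gap_adapted continuous_target_gap) auto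
    ultimately show ?thesis by (rule measurable_cong[THEN iffD2])
  qed
qed

lemma stop_le_hit_time: "hit_set N L X \<omega> \<noteq> {} \<Longrightarrow> stop T \<omega> \<le> hit_time N L X \<omega>"
  by (simp add: stop_def)

lemma below_targets_before_stop:
  assumes \<omega>: "\<omega> \<in> space M" and r: "0 \<le> r" "r \<le> stop T \<omega>"
  shows "snd (X r \<omega>) \<le> L (fst (X r \<omega>))"
proof (rule ccontr)
  define i where "i = fst (X r \<omega>)"
  assume "\<not> snd (X r \<omega>) \<le> L (fst (X r \<omega>))"
  then have beyond: "L i < leg_coord i (X r \<omega>)" by (simp add: i_def leg_coord_def)
  have i: "i < N" using X_point[OF \<omega> r(1)] by (simp add: sp_point_def i_def)
  have "0 < L i" using L_pos i by blast
  then have "leg_coord i (X 0 \<omega>) \<le> L i" using X_0[OF \<omega>] by (simp add: leg_coord_def)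
  moreover have "continuous_on {0..r} (\<lambda>t. leg_coord i (X t \<omega>))"
    using continuous_on_leg_coord[where N=N, OF X_continuous[OF \<omega>] X_point[OF \<omega>]]
    by (rule continuous_on_subset) auto
  ultimately obtain s where s: "0 \<le> s" "s \<le> r" "leg_coord i (X s \<omega>) = L i"
    using IVT'[of "\<lambda>t. leg_coord i (X t \<omega>)" 0 "L i" r] beyond r(1) by force
  then have hit: "s \<in> hit_set N L X \<omega>"
    using leg_coord_eq_L_iff[OF i] i by (auto simp: hit_set_def)
  have "s < r" using s beyond by (cases "s = r") auto
  moreover have "stop T \<omega> \<le> s"
    using stop_le_hit_time[of \<omega> T] hit_time_le[OF hit] hit by fastforce
  ultimately show False using r(2) by simp
qed

lemma Psi_eq_before_stop:
  assumes "\<omega> \<in> space M" "r \<in> {0..stop T \<omega>}"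
  shows "Psi r \<omega> = lam * Phi r \<omega>"
  using assms u''_eq below_targets_before_stop X_point[OF assms(1), of r]
  by (auto simp: Psi_def Phi_def sp_point_def)

lemma Phi_0: "\<omega> \<in> space M \<Longrightarrow> Phi 0 \<omega> = laplace_origin N L k"
  using X_point[of \<omega> 0] X_0[of \<omega>] L_pos u_eq
  by (auto simp: Phi_def sp_point_def laplace_leg_origin less_imp_le)

lemma discount_Y_stop:
  assumes \<omega>: "\<omega> \<in> space M" and "0 \<le> T"
  shows "discount lam (\<lambda>r. Y r \<omega>) (stop T \<omega>)
    = exp (- lam * stop T \<omega>) * Phi (stop T \<omega>) \<omega> - laplace_origin N L k"
proof -
  have "(\<lambda>r. Y r \<omega>) = (\<lambda>t. Phi t \<omega> - Phi 0 \<omega> - integral {0..t} (\<lambda>r. Psi r \<omega>))"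
    by (simp add: Y_def fun_eq_iff)
  moreover have "discount lam (\<lambda>t. Phi t \<omega> - Phi 0 \<omega> - integral {0..t} (\<lambda>r. Psi r \<omega>)) (stop T \<omega>)
      = exp (- lam * stop T \<omega>) * Phi (stop T \<omega>) \<omega> - Phi 0 \<omega>"
    using stop_range[OF assms] Psi_eq_before_stop[OF \<omega>]
    by (intro discount_eigen continuous_on_subset[OF continuous_Phi[OF \<omega>]]) auto
  ultimately show ?thesis using Phi_0[OF \<omega>] by simp
qed

lemma bounded_stopped:
  "\<exists>B. \<forall>T\<ge>0. \<forall>\<omega>\<in>space M. \<bar>exp (- lam * stop T \<omega>) * Phi (stop T \<omega>) \<omega>\<bar> \<le> B"
proof -
  obtain B where B: "\<forall>\<omega>\<in>space M. \<forall>t\<ge>0. \<bar>Phi t \<omega>\<bar> \<le> B" using bounded_Phi_Psi(1) ..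
  have "\<bar>exp (- lam * stop T \<omega>) * Phi (stop T \<omega>) \<omega>\<bar> \<le> B" if "0 \<le> T" "\<omega> \<in> space M" for T \<omega>
  proof -
    have "0 \<le> stop T \<omega>" using stop_range[OF that(2,1)] by simp
    then have "\<bar>exp (- lam * stop T \<omega>)\<bar> \<le> 1" "\<bar>Phi (stop T \<omega>) \<omega>\<bar> \<le> B"
      using lam B that by simp_all
    then have "\<bar>exp (- lam * stop T \<omega>) * Phi (stop T \<omega>) \<omega>\<bar> \<le> 1 * B"
      unfolding abs_mult by (rule mult_mono) simp_all
    then show ?thesis by simp
  qed
  then show ?thesis by blast
qed

lemma stopped_value:
  assumes "0 < T"
  shows "(\<lambda>\<omega>. exp (- lam * stop T \<omega>) * Phi (stop T \<omega>) \<omega>) \<in> borel_measurable M"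
    and "(\<integral>\<omega>. exp (- lam * stop T \<omega>) * Phi (stop T \<omega>) \<omega> \<partial>M) = laplace_origin N L k"
proof -
  have T: "0 \<le> T" using assms by simp
  note stopped = Z.optional_stopping[OF assms stopping_time_stop[OF T] stop_range[OF _ T]]
  let ?Z = "\<lambda>\<omega>. discount lam (\<lambda>r. Y r \<omega>) (stop T \<omega>)"
  have eq: "exp (- lam * stop T \<omega>) * Phi (stop T \<omega>) \<omega> = ?Z \<omega> + laplace_origin N L k"
    if "\<omega> \<in> space M" for \<omega>
    using discount_Y_stop[OF that T] by simp
  have "(\<lambda>\<omega>. ?Z \<omega> + laplace_origin N L k) \<in> borel_measurable M"
    using stopped(1) by simp
  then show meas: "(\<lambda>\<omega>. exp (- lam * stop T \<omega>) * Phi (stop T \<omega>) \<omega>) \<in> borel_measurable M"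
    by (rule measurable_cong[THEN iffD2, rotated]) (rule eq)
  obtain B where B: "\<forall>\<omega>\<in>space M. \<bar>exp (- lam * stop T \<omega>) * Phi (stop T \<omega>) \<omega>\<bar> \<le> B"
    using bounded_stopped T by blast
  have "\<bar>?Z \<omega>\<bar> \<le> B + \<bar>laplace_origin N L k\<bar>" if "\<omega> \<in> space M" for \<omega>
    using B eq[OF that] that by force
  with stopped(1) have "integrable M ?Z" by (intro integrable_bounded)
  have "(\<integral>\<omega>. exp (- lam * stop T \<omega>) * Phi (stop T \<omega>) \<omega> \<partial>M)
      = (\<integral>\<omega>. ?Z \<omega> + laplace_origin N L k \<partial>M)"
    by (rule Bochner_Integration.integral_cong[OF refl eq])
  also have "\<dots> = (\<integral>\<omega>. ?Z \<omega> \<partial>M) + laplace_origin N L k"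
    using \<open>integrable M ?Z\<close> by (simp add: prob_space)
  also have "(\<integral>\<omega>. ?Z \<omega> \<partial>M) = 0"
    using stopped(2) by (simp add: Y_def)
  finally show "(\<integral>\<omega>. exp (- lam * stop T \<omega>) * Phi (stop T \<omega>) \<omega> \<partial>M) = laplace_origin N L k"
    by simp
qed

lemma tendsto_stopped_never_hit:
  assumes \<omega>: "\<omega> \<in> space M" and never: "hit_set N L X \<omega> = {}"
  shows "(\<lambda>m. exp (- lam * stop (Suc m) \<omega>) * Phi (stop (Suc m) \<omega>) \<omega>) \<longlonglongrightarrow> 0"
proof -
  obtain B where "\<forall>\<omega>\<in>space M. \<forall>t\<ge>0. \<bar>Phi t \<omega>\<bar> \<le> B" using bounded_Phi_Psi(1) ..
  then have B: "\<And>t. 0 \<le> t \<Longrightarrow> \<bar>Phi t \<omega>\<bar> \<le> B" using \<omega> by blast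
  have "(\<lambda>m. exp (- lam) ^ Suc m * B) \<longlonglongrightarrow> 0 * B"
    using lam by (intro tendsto_mult tendsto_const LIMSEQ_power_zero[THEN LIMSEQ_Suc]) simp
  then have lim: "(\<lambda>m. exp (- lam) ^ Suc m * B) \<longlonglongrightarrow> 0" by simp
  have bound: "norm (exp (- lam * stop (Suc m) \<omega>) * Phi (stop (Suc m) \<omega>) \<omega>)
      \<le> exp (- lam) ^ Suc m * B" for m
  proof -
    have "stop (Suc m) \<omega> = real (Suc m)" using never by (simp add: stop_def)
    then have "norm (exp (- lam * stop (Suc m) \<omega>) * Phi (stop (Suc m) \<omega>) \<omega>)
        = exp (- lam * real (Suc m)) * \<bar>Phi (real (Suc m)) \<omega>\<bar>"
      by (simp add: abs_mult)
    also have "\<dots> \<le> exp (- lam * real (Suc m)) * B" by (rule mult_left_mono) (use B in auto)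
    also have "exp (- lam * real (Suc m)) = exp (- lam) ^ Suc m"
      by (subst exp_of_nat_mult[symmetric]) (simp add: mult.commute)
    finally show ?thesis .
  qed
  show ?thesis
    using bound by (intro Lim_null_comparison[OF always_eventually lim]) blast
qed

lemma tendsto_stopped_exp_hit:
  assumes \<omega>: "\<omega> \<in> space M"
  shows "(\<lambda>m. exp (- lam * stop (Suc m) \<omega>) * Phi (stop (Suc m) \<omega>) \<omega>) \<longlonglongrightarrow> exp_hit lam N L X \<omega>"
proof (cases "hit_set N L X \<omega> = {}")
  case True
  then show ?thesis using tendsto_stopped_never_hit[OF \<omega>] by (simp add: exp_hit_def)
next
  case False
  define \<tau> where "\<tau> = hit_time N L X \<omega>"
  obtain i where i: "i < N" "X \<tau> \<omega> = (i, L i)"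
    using hit_time_in_hit_set[OF \<omega> False] unfolding \<tau>_def hit_set_def by blast
  have "0 < L i" using i(1) L_pos by blast
  then have Phi_\<tau>: "Phi \<tau> \<omega> = 1"
    using i k_pos by (simp add: Phi_def u_eq laplace_leg_end)
  obtain m0 :: nat where "\<tau> < m0" using reals_Archimedean2 by blast
  then have "\<forall>\<^sub>F m in sequentially. exp (- lam * stop (Suc m) \<omega>) * Phi (stop (Suc m) \<omega>) \<omega>
      = exp (- lam * \<tau>)"
    using False Phi_\<tau> by (intro eventually_sequentiallyI[of m0]) (simp add: stop_def \<tau>_def)
  then show ?thesis using False by (simp add: exp_hit_def \<tau>_def tendsto_eventually)
qed

lemma integral_exp_hit: "(\<integral>\<omega>. exp_hit lam N L X \<omega> \<partial>M) = laplace_origin N L k"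
proof -
  let ?g = "\<lambda>m \<omega>. exp (- lam * stop (Suc m) \<omega>) * Phi (stop (Suc m) \<omega>) \<omega>"
  obtain B where B: "\<forall>T\<ge>0. \<forall>\<omega>\<in>space M. \<bar>exp (- lam * stop T \<omega>) * Phi (stop T \<omega>) \<omega>\<bar> \<le> B"
    using bounded_stopped ..
  have meas: "?g m \<in> borel_measurable M" for m
    by (rule stopped_value(1)) simp
  have "(\<lambda>m. \<integral>\<omega>. ?g m \<omega> \<partial>M) \<longlonglongrightarrow> (\<integral>\<omega>. exp_hit lam N L X \<omega> \<partial>M)"
  proof (rule integral_dominated_convergence[where w="\<lambda>_. B"])
    show "exp_hit lam N L X \<in> borel_measurable M"
      using tendsto_stopped_exp_hit meas by (rule borel_measurable_LIMSEQ_real)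
    show "AE \<omega> in M. (\<lambda>m. ?g m \<omega>) \<longlonglongrightarrow> exp_hit lam N L X \<omega>"
      using tendsto_stopped_exp_hit by (rule AE_I2)
    show "AE \<omega> in M. norm (?g m \<omega>) \<le> B" for m
      using B by (intro AE_I2) simp
    show "?g m \<in> borel_measurable M" for m by (rule meas)
  qed simp
  moreover have "(\<integral>\<omega>. ?g m \<omega> \<partial>M) = laplace_origin N L k" for m
    by (rule stopped_value(2)) simp
  ultimately show ?thesis by (simp add: LIMSEQ_const_iff)
qed

end

theorem theorem2p3:
  fixes N :: nat and M :: "'a measure" and F :: "real \<Rightarrow> 'a measure"
    and X :: "real \<Rightarrow> 'a \<Rightarrow> nat \<times> real" and L :: "nat \<Rightarrow> real" and lam :: real
  assumes "N \<ge> 2"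
    and "spider_BM N M F X"
    and "\<forall>i<N. L i > 0"
    and "lam > 0"
  shows "(\<integral>\<omega>. exp_hit lam N L X \<omega> \<partial>M) =
     (\<Sum>i<N. sqrt (2 * lam) / sinh (sqrt (2 * lam) * L i)) /
     (\<Sum>i<N. sqrt (2 * lam) * cosh (sqrt (2 * lam) * L i) / sinh (sqrt (2 * lam) * L i))"
proof -
  interpret spider_hitting N M F X L lam
    using assms by unfold_locales
  have "k \<noteq> 0" using k_pos by simp
  have "(\<integral>\<omega>. exp_hit lam N L X \<omega> \<partial>M) = laplace_origin N L k"
    by (rule integral_exp_hit)
  also have "\<dots> = (k * (\<Sum>i<N. 1 / sinh (k * L i))) / (k * (\<Sum>i<N. cosh (k * L i) / sinh (k * L i)))"
    using \<open>k \<noteq> 0\<close> by (simp add: laplace_origin_def)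
  finally show ?thesis by (simp add: k_def sum_distrib_left)
qed

end
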